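(* In the setting described in the context, assume $\beta\colon\Gamma\to\mathrm M_{\mathcal U}$ satisfies $\alpha(g,h)=\varphi_{\mathcal U}(g)\beta(h)\varphi_{\mathcal U}(g)^*-\beta(gh)+\beta(g)$ for all $g,h$ and $\beta(g)^*=-\beta(g)$ for all $g$. For each $g$ let $(\beta_n(g))_n$, $\beta_n(g)\in\mathrm M_{k_n}(\mathbb C)$ with $\beta_n(g)^*=-\beta_n(g)$, be a bounded sequence representing $\beta(g)$, and set $\psi_n(g)=\exp(-\mathrm{def}(\varphi_n)\beta_n(g))\tilde\varphi_n(g)$. Then for all $g,h\in\Gamma$, $\|\psi_n(gh)-\psi_n(g)\psi_n(h)\|=o_{\mathcal U}(\mathrm{def}(\varphi_n))$.
   Context: Fix a non-principal ultrafilter $\mathcal U$ on $\mathbb N$; $x_n=O_{\mathcal U}(y_n)$ means $x_n\le Cy_n$ for all $n$ in a set belonging to $\mathcal U$, some constant $C$; $x_n=o_{\mathcal U}(y_n)$ means $x_n=\varepsilon_ny_n$ with $\varepsilon_n\ge0$ and $\lim_{n\to\mathcal U}\varepsilon_n=0$. Let $\Gamma=\langle S\mid R\rangle$ be finitely presented ($S,R$ finite, $\mathbb F_S$ free on $S$). For each $k$ fix a unitarily invariant, submultiplicative norm $\|\cdot\|$ on $\mathrm M_k(\mathbb C)$. For $\varphi\colon S\to\mathrm U(k)$ (extended to $\mathbb F_S$), $\mathrm{def}(\varphi)=\max_{r\in R}\|\varphi(r)-1_k\|$. Let $\varphi_n\colon S\to\mathrm U(k_n)$ with $\lim_{n\to\mathcal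 U}\mathrm{def}(\varphi_n)=0$. $\mathrm M_{\mathcal U}$ is the Banach space of bounded sequences $(T_n)$, $T_n\in\mathrm M_{k_n}(\mathbb C)$, modulo those with $\lim_{n\to\mathcal U}\|T_n\|=0$; $\mathrm U_{\mathcal U}$ is $\prod_n\mathrm U(k_n)$ modulo sequences with $\lim_{n\to\mathcal U}\|u_n-1\|=0$, acting on $\mathrm M_{\mathcal U}$ by left/right multiplication; $\varphi_{\mathcal U}\colon\Gamma\to\mathrm U_{\mathcal U}$ is the induced homomorphism. Fix a section $\sigma\colon\Gamma\to\mathbb F_S$ of the canonical surjection and $\tilde\varphi_n\colon\Gamma\to\mathrm U(k_n)$ with $\tilde\varphi_n(1_\Gamma)=1$, $\tilde\varphi_n(g^{-1})=\tilde\varphi_n(g)^*$, $\|\varphi_n(\sigma(g))-\tilde\varphi_n(g)\|=O_{\mathcal U}(\mathrm{def}(\varphi_n))$. Let $c_n(g,h)=(\tilde\varphi_n(g)\tilde\varphi_n(h)-\tilde\varphi_n(gh))/\mathrm{def}(\varphi_n)$ if $\mathrm{def}(\varphi_n)>0$, else $0$; $c(g,h)\in\mathrm M_{\mathcal U}$ its class; $\alpha(g,h)=c(g,h)\varphi_{\mathcal U}(gh)^*$. *)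

theory Defs
  imports "HOL-Algebra.Group" "Jordan_Normal_Form.Schur_Decomposition"
begin

definition nonprincipal_ultrafilter :: "nat filter \<Rightarrow> bool" where
  "nonprincipal_ultrafilter F \<longleftrightarrow>
     F \<noteq> bot \<and> (\<forall>P. eventually P F \<or> eventually (\<lambda>x. \<not> P x) F)
     \<and> (\<forall>m. eventually (\<lambda>n. n \<noteq> m) F)"

text \<open>Equality of classes in the ultraproduct Banach space M_U (or of classes of
  unitaries in U_U): two sequences represent the same element iff the
  U-limit of the norms of their differences is 0.\<close>
definition ueq :: "nat filter \<Rightarrow> (complex mat \<Rightarrow> real) \<Rightarrow> (nat \<Rightarrow> complex mat) \<Rightarrow> (nat \<Rightarrow> complex mat) \<Rightarrow> bool" where
  "ueq F nrm x y \<longleftrightarrow> ((\<lambda>n. nrm (x n - y n)) \<longlongrightarrow> 0) F"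

definition small_o_U :: "nat filter \<Rightarrow> (nat \<Rightarrow> real) \<Rightarrow> (nat \<Rightarrow> real) \<Rightarrow> bool" where
  "small_o_U F x y \<longleftrightarrow> (\<exists>eps. (\<forall>n. eps n \<ge> 0) \<and> (eps \<longlongrightarrow> 0) F
        \<and> eventually (\<lambda>n. x n = eps n * y n) F)"

definition unitary_mat :: "nat \<Rightarrow> complex mat \<Rightarrow> bool" where
  "unitary_mat k A \<longleftrightarrow> A \<in> carrier_mat k k \<and> mat_adjoint A * A = 1\<^sub>m k \<and> A * mat_adjoint A = 1\<^sub>m k"

definition unitarily_invariant_submult_norms :: "(complex mat \<Rightarrow> real) \<Rightarrow> bool" where
  "unitarily_invariant_submult_norms nrm \<longleftrightarrow> (\<forall>k.
     (\<forall>A \<in> carrier_mat k k. 0 \<le> nrm A \<and> (nrm A = 0 \<longleftrightarrow> A = 0\<^sub>m k k)) \<and>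
     (\<forall>A \<in> carrier_mat k k. \<forall>c. nrm (c \<cdot>\<^sub>m A) = cmod c * nrm A) \<and>
     (\<forall>A \<in> carrier_mat k k. \<forall>B \<in> carrier_mat k k. nrm (A + B) \<le> nrm A + nrm B) \<and>
     (\<forall>A \<in> carrier_mat k k. \<forall>B \<in> carrier_mat k k. nrm (A * B) \<le> nrm A * nrm B) \<and>
     (\<forall>A \<in> carrier_mat k k. \<forall>V W. unitary_mat k V \<longrightarrow> unitary_mat k W \<longrightarrow> nrm (V * A * W) = nrm A))"

definition mat_exp :: "complex mat \<Rightarrow> complex mat" where
  "mat_exp A = mat (dim_row A) (dim_col A) (\<lambda>(i,j). \<Sum>m. (A ^\<^sub>m m) $$ (i,j) / of_nat (fact m))"

text \<open>Words over S: a letter (s, True) stands for s, (s, False) for s^{-1}.\<close>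
type_synonym 's word = "('s \<times> bool) list"

definition words :: "'s set \<Rightarrow> 's word set" where
  "words S = {w. \<forall>x \<in> set w. fst x \<in> S}"

definition word_inv :: "'s word \<Rightarrow> 's word" where
  "word_inv w = rev (map (\<lambda>(s,b). (s, \<not> b)) w)"

text \<open>Words representing elements of the normal closure of R in the free group F_S.\<close>
inductive_set rel_triv :: "'s set \<Rightarrow> 's word set \<Rightarrow> 's word set" for S R where
  nil: "[] \<in> rel_triv S R"
| rel: "r \<in> R \<Longrightarrow> r \<in> rel_triv S R"
| rel_inv: "r \<in> R \<Longrightarrow> word_inv r \<in> rel_triv S R"
| app: "u \<in> rel_triv S R \<Longrightarrow> v \<in> rel_triv S R \<Longrightarrow> u @ v \<in> rel_triv S R"
| conj: "w \<in> rel_triv S R \<Longrightarrow> x \<in> words S \<Longrightarrow> x @ w @ word_inv x \<in> rel_triv S R"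
| ins: "u @ v \<in> rel_triv S R \<Longrightarrow> s \<in> S \<Longrightarrow> u @ [(s,b),(s,\<not> b)] @ v \<in> rel_triv S R"
| del: "u @ [(s,b),(s,\<not> b)] @ v \<in> rel_triv S R \<Longrightarrow> u @ v \<in> rel_triv S R"

text \<open>pi : words over S -> G induces an isomorphism F_S / <<R>> = G, i.e. G = <S | R>
  is a finite presentation with canonical surjection pi.\<close>
definition is_presentation :: "('g, 'm) monoid_scheme \<Rightarrow> 's set \<Rightarrow> 's word set \<Rightarrow> ('s word \<Rightarrow> 'g) \<Rightarrow> bool" where
  "is_presentation G S R \<pi> \<longleftrightarrow> group G \<and> finite S \<and> finite R \<and> R \<subseteq> words S \<and>
     \<pi> ` words S = carrier G \<and> \<pi> [] = \<one>\<^bsub>G\<^esub> \<and>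
     (\<forall>u \<in> words S. \<forall>v \<in> words S. \<pi> (u @ v) = \<pi> u \<otimes>\<^bsub>G\<^esub> \<pi> v) \<and>
     (\<forall>s \<in> S. \<pi> [(s, False)] = inv\<^bsub>G\<^esub> (\<pi> [(s, True)])) \<and>
     (\<forall>w \<in> words S. \<pi> w = \<one>\<^bsub>G\<^esub> \<longleftrightarrow> w \<in> rel_triv S R)"

definition word_eval :: "nat \<Rightarrow> ('s \<Rightarrow> complex mat) \<Rightarrow> 's word \<Rightarrow> complex mat" where
  "word_eval k f w = foldr (\<lambda>(s,b) M. (if b then f s else mat_adjoint (f s)) * M) w (1\<^sub>m k)"

definition deficiency :: "(complex mat \<Rightarrow> real) \<Rightarrow> nat \<Rightarrow> 's word set \<Rightarrow> ('s \<Rightarrow> complex mat) \<Rightarrow> real" where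
  "deficiency nrm k R f = Max (insert 0 ((\<lambda>r. nrm (word_eval k f r - 1\<^sub>m k)) ` R))"

definition coc :: "(complex mat \<Rightarrow> real) \<Rightarrow> (nat \<Rightarrow> nat) \<Rightarrow> 's word set \<Rightarrow> (nat \<Rightarrow> 's \<Rightarrow> complex mat)
     \<Rightarrow> ('g, 'm) monoid_scheme \<Rightarrow> (nat \<Rightarrow> 'g \<Rightarrow> complex mat) \<Rightarrow> nat \<Rightarrow> 'g \<Rightarrow> 'g \<Rightarrow> complex mat" where
  "coc nrm k R \<phi> G pt n g h =
     (let d = deficiency nrm (k n) R (\<phi> n) in
      if d > 0 then (1 / complex_of_real d) \<cdot>\<^sub>m (pt n g * pt n h - pt n (g \<otimes>\<^bsub>G\<^esub> h))
      else 0\<^sub>m (k n) (k n))"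

definition psi :: "(complex mat \<Rightarrow> real) \<Rightarrow> (nat \<Rightarrow> nat) \<Rightarrow> 's word set \<Rightarrow> (nat \<Rightarrow> 's \<Rightarrow> complex mat)
     \<Rightarrow> (nat \<Rightarrow> 'g \<Rightarrow> complex mat) \<Rightarrow> (nat \<Rightarrow> 'g \<Rightarrow> complex mat) \<Rightarrow> nat \<Rightarrow> 'g \<Rightarrow> complex mat" where
  "psi nrm k R \<phi> \<beta> pt n g =
     mat_exp ((- complex_of_real (deficiency nrm (k n) R (\<phi> n))) \<cdot>\<^sub>m \<beta> n g) * pt n g"

end

theory Submission
  imports Defs
begin

(* Write P for the lifts tilde-phi_n, W for the images of the chosen words sigma(g) under phi_n,
   B for beta_n and d for def(phi_n).  Expanding exp(-d B) = 1 - d B + O(d^2), the defect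
   psi(gh) - psi(g) psi(h) equals, up to O(d^2),
     - (P_g P_h - P_gh) - d (B_gh P_gh - B_g P_g P_h - P_g B_h P_h).
   Since P_g P_h - P_gh = d c, multiplying on the right by P_gh^* and replacing P by W (they differ
   by O(d)) turns this into d times the defect of the cocycle equation
     c W_gh^* = W_g B_h W_g^* - B_gh + B_g,
   plus O(d^2); that defect tends to 0 along U by hypothesis.  The inputs are that words in the
   normal closure of the relators evaluate to within O(d) of the identity, so that the lifts are
   multiplicative up to O(d), and the bound |exp A - 1 - A| <= |A|^2 for |A| <= 1, which follows
   from the scalar series because on matrices of a fixed size entrywise convergence implies
   convergence in norm. *)

section \<open>Unitary matrices and unitarily invariant norms\<close>

lemma mat_adjoint_dim [simp]:
  "dim_row (mat_adjoint A) = dim_col A" "dim_col (mat_adjoint A) = dim_row A"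
  unfolding mat_adjoint_def by auto

lemma mat_adjoint_index [simp]:
  "i < dim_col A \<Longrightarrow> j < dim_row A \<Longrightarrow> mat_adjoint A $$ (i,j) = cnj (A $$ (j,i))"
  unfolding mat_adjoint_def by (simp add: mat_of_rows_index conjugate_complex_def)

lemma mat_adjoint_carrier [simp]: "A \<in> carrier_mat n m \<Longrightarrow> mat_adjoint A \<in> carrier_mat m n"
  unfolding carrier_mat_def by simp

lemma mat_adjoint_adjoint [simp]: "mat_adjoint (mat_adjoint A) = (A :: complex mat)"
  by (rule eq_matI) auto

lemma mat_adjoint_one [simp]: "mat_adjoint (1\<^sub>m n) = (1\<^sub>m n :: complex mat)"
  by (rule eq_matI) auto

lemma mat_adjoint_mult:
  assumes "A \<in> carrier_mat n m" "B \<in> carrier_mat m p"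
  shows "mat_adjoint (A * B) = mat_adjoint B * mat_adjoint (A :: complex mat)"
proof (rule eq_matI)
  fix i j assume "i < dim_row (mat_adjoint B * mat_adjoint A)" "j < dim_col (mat_adjoint B * mat_adjoint A)"
  then have i: "i < p" and j: "j < n" using assms by auto
  have "mat_adjoint (A * B) $$ (i,j) = cnj (\<Sum>l<m. A $$ (j,l) * B $$ (l,i))"
    using assms i j by (simp add: scalar_prod_def atLeast0LessThan)
  also have "\<dots> = (\<Sum>l<m. cnj (B $$ (l,i)) * cnj (A $$ (j,l)))" by (simp add: mult.commute)
  also have "\<dots> = (mat_adjoint B * mat_adjoint A) $$ (i,j)"
    using assms i j by (simp add: scalar_prod_def atLeast0LessThan)
  finally show "mat_adjoint (A * B) $$ (i,j) = (mat_adjoint B * mat_adjoint A) $$ (i,j)" .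
qed (use assms in simp_all)

lemma square_mat_closed:
  fixes A B :: "complex mat"
  shows "A \<in> carrier_mat k k \<Longrightarrow> B \<in> carrier_mat k k \<Longrightarrow> A + B \<in> carrier_mat k k"
    "A \<in> carrier_mat k k \<Longrightarrow> B \<in> carrier_mat k k \<Longrightarrow> A - B \<in> carrier_mat k k"
    "A \<in> carrier_mat k k \<Longrightarrow> B \<in> carrier_mat k k \<Longrightarrow> A * B \<in> carrier_mat k k"
    "A \<in> carrier_mat k k \<Longrightarrow> - A \<in> carrier_mat k k"
    "A \<in> carrier_mat k k \<Longrightarrow> a \<cdot>\<^sub>m A \<in> carrier_mat k k"
    "A \<in> carrier_mat k k \<Longrightarrow> mat_adjoint A \<in> carrier_mat k k"
    "1\<^sub>m k \<in> carrier_mat k k" "0\<^sub>m k k \<in> carrier_mat k k"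
  by auto

text \<open>The library's ring laws for matrices, specialised to square matrices so that the
  simplifier can discharge their dimension side conditions.\<close>
lemma square_mat_algebra:
  fixes A B C :: "complex mat"
  shows "A \<in> carrier_mat k k \<Longrightarrow> B \<in> carrier_mat k k \<Longrightarrow> C \<in> carrier_mat k k \<Longrightarrow>
      (A + B) * C = A * C + B * C"
    "A \<in> carrier_mat k k \<Longrightarrow> B \<in> carrier_mat k k \<Longrightarrow> C \<in> carrier_mat k k \<Longrightarrow>
      A * (B + C) = A * B + A * C"
    "A \<in> carrier_mat k k \<Longrightarrow> B \<in> carrier_mat k k \<Longrightarrow> C \<in> carrier_mat k k \<Longrightarrow>
      (A - B) * C = A * C - B * C"
    "A \<in> carrier_mat k k \<Longrightarrow> B \<in> carrier_mat k k \<Longrightarrow> C \<in> carrier_mat k k \<Longrightarrow>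
      A * (B - C) = A * B - A * C"
    "A \<in> carrier_mat k k \<Longrightarrow> B \<in> carrier_mat k k \<Longrightarrow> (a \<cdot>\<^sub>m A) * B = a \<cdot>\<^sub>m (A * B)"
    "A \<in> carrier_mat k k \<Longrightarrow> B \<in> carrier_mat k k \<Longrightarrow> A * (a \<cdot>\<^sub>m B) = a \<cdot>\<^sub>m (A * B)"
    "A \<in> carrier_mat k k \<Longrightarrow> B \<in> carrier_mat k k \<Longrightarrow> C \<in> carrier_mat k k \<Longrightarrow>
      (A * B) * C = A * (B * C)"
    "A \<in> carrier_mat k k \<Longrightarrow> B \<in> carrier_mat k k \<Longrightarrow> (- A) * B = - (A * B)"
    "A \<in> carrier_mat k k \<Longrightarrow> B \<in> carrier_mat k k \<Longrightarrow> A * (- B) = - (A * B)"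
    "A \<in> carrier_mat k k \<Longrightarrow> A * 1\<^sub>m k = A" "A \<in> carrier_mat k k \<Longrightarrow> 1\<^sub>m k * A = A"
  by (auto intro!: eq_matI add_mult_distrib_mat mult_add_distrib_mat minus_mult_distrib_mat
      mult_minus_distrib_mat mult_smult_assoc_mat mult_smult_distrib assoc_mult_mat)

lemma unitary_mat_carrier: "unitary_mat k U \<Longrightarrow> U \<in> carrier_mat k k"
  unfolding unitary_mat_def by simp

lemma unitary_mat_adjoint_mult: "unitary_mat k U \<Longrightarrow> mat_adjoint U * U = 1\<^sub>m k"
  unfolding unitary_mat_def by simp

lemma unitary_mat_mult_adjoint: "unitary_mat k U \<Longrightarrow> U * mat_adjoint U = 1\<^sub>m k"
  unfolding unitary_mat_def by simp

lemma unitary_mat_adjoint_mult_cancel: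
  assumes "unitary_mat k U" "X \<in> carrier_mat k k"
  shows "mat_adjoint U * (U * X) = X" "U * (mat_adjoint U * X) = X"
  using assms unitary_mat_carrier[OF assms(1)]
  by (simp_all add: square_mat_algebra(7)[where k=k, symmetric] unitary_mat_adjoint_mult
      unitary_mat_mult_adjoint square_mat_algebra(11))

lemma unitary_mat_one: "unitary_mat k (1\<^sub>m k)"
  unfolding unitary_mat_def by simp

lemma unitary_mat_adjoint: "unitary_mat k U \<Longrightarrow> unitary_mat k (mat_adjoint U)"
  unfolding unitary_mat_def by simp

lemma unitary_mat_mult:
  assumes "unitary_mat k U" "unitary_mat k V"
  shows "unitary_mat k (U * V)"
proof -
  have c: "U \<in> carrier_mat k k" "V \<in> carrier_mat k k" using assms by (simp_all add: unitary_mat_carrier)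
  show ?thesis
    unfolding unitary_mat_def mat_adjoint_mult[OF c]
    using c assms
    by (simp add: square_mat_closed square_mat_algebra(7)[where k=k] unitary_mat_adjoint_mult_cancel[OF assms(1)]
        unitary_mat_adjoint_mult_cancel[OF assms(2)] unitary_mat_adjoint_mult unitary_mat_mult_adjoint)
qed

locale unitarily_invariant_norm =
  fixes nrm :: "complex mat \<Rightarrow> real"
  assumes unitarily_invariant_submult: "unitarily_invariant_submult_norms nrm"
begin

lemma nrm_nonneg: "A \<in> carrier_mat k k \<Longrightarrow> 0 \<le> nrm A"
  using unitarily_invariant_submult unfolding unitarily_invariant_submult_norms_def by blast

lemma nrm_eq_0_iff: "A \<in> carrier_mat k k \<Longrightarrow> nrm A = 0 \<longleftrightarrow> A = 0\<^sub>m k k"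
  using unitarily_invariant_submult unfolding unitarily_invariant_submult_norms_def by blast

lemma nrm_zero [simp]: "nrm (0\<^sub>m k k) = 0"
  using nrm_eq_0_iff[of "0\<^sub>m k k" k] by simp

lemma nrm_smult: "A \<in> carrier_mat k k \<Longrightarrow> nrm (c \<cdot>\<^sub>m A) = cmod c * nrm A"
  using unitarily_invariant_submult unfolding unitarily_invariant_submult_norms_def by blast

lemma nrm_triangle: "A \<in> carrier_mat k k \<Longrightarrow> B \<in> carrier_mat k k \<Longrightarrow> nrm (A + B) \<le> nrm A + nrm B"
  using unitarily_invariant_submult unfolding unitarily_invariant_submult_norms_def by blast

lemma nrm_submult: "A \<in> carrier_mat k k \<Longrightarrow> B \<in> carrier_mat k k \<Longrightarrow> nrm (A * B) \<le> nrm A * nrm B"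
  using unitarily_invariant_submult unfolding unitarily_invariant_submult_norms_def by blast

lemma nrm_unitary_invariant:
  "A \<in> carrier_mat k k \<Longrightarrow> unitary_mat k V \<Longrightarrow> unitary_mat k W \<Longrightarrow> nrm (V * A * W) = nrm A"
  using unitarily_invariant_submult unfolding unitarily_invariant_submult_norms_def by blast

lemma nrm_uminus: "A \<in> carrier_mat k k \<Longrightarrow> nrm (- A) = nrm A"
proof -
  assume A: "A \<in> carrier_mat k k"
  have "- A = (-1) \<cdot>\<^sub>m A" using A by (intro eq_matI) auto
  then show ?thesis using A by (simp add: nrm_smult)
qed

lemma nrm_diff_le: "A \<in> carrier_mat k k \<Longrightarrow> B \<in> carrier_mat k k \<Longrightarrow> nrm (A - B) \<le> nrm A + nrm B"
  using nrm_triangle[of A k "- B"] nrm_uminus[of B k] by (simp add: minus_add_uminus_mat)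

lemma nrm_diff_commute: "A \<in> carrier_mat k k \<Longrightarrow> B \<in> carrier_mat k k \<Longrightarrow> nrm (A - B) = nrm (B - A)"
proof -
  assume AB: "A \<in> carrier_mat k k" "B \<in> carrier_mat k k"
  have "B - A = - (A - B)" using AB by (intro eq_matI) auto
  then show ?thesis using nrm_uminus[of "A - B" k] AB by (simp add: square_mat_closed)
qed

lemma nrm_unitary_left: "A \<in> carrier_mat k k \<Longrightarrow> unitary_mat k V \<Longrightarrow> nrm (V * A) = nrm A"
  using nrm_unitary_invariant[of A k V "1\<^sub>m k"] unitary_mat_one[of k] unitary_mat_carrier[of k V]
  by (simp add: square_mat_algebra(10)[where k=k])

lemma nrm_unitary_right: "A \<in> carrier_mat k k \<Longrightarrow> unitary_mat k V \<Longrightarrow> nrm (A * V) = nrm A"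
  using nrm_unitary_invariant[of A k "1\<^sub>m k" V] unitary_mat_one[of k] unitary_mat_carrier[of k V]
  by (simp add: square_mat_algebra(11)[where k=k])

lemma nrm_adjoint_diff_one:
  assumes U: "unitary_mat k U"
  shows "nrm (mat_adjoint U - 1\<^sub>m k) = nrm (U - 1\<^sub>m k)"
proof -
  have c: "U \<in> carrier_mat k k" by (rule unitary_mat_carrier[OF U])
  have "mat_adjoint U - 1\<^sub>m k = mat_adjoint U * (1\<^sub>m k - U)"
    using c by (simp add: square_mat_closed square_mat_algebra[where k=k] unitary_mat_adjoint_mult[OF U])
  then have "nrm (mat_adjoint U - 1\<^sub>m k) = nrm (1\<^sub>m k - U)"
    using nrm_unitary_left[OF _ unitary_mat_adjoint[OF U], of "1\<^sub>m k - U"] c by (simp add: square_mat_closed)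
  also have "\<dots> = nrm (U - 1\<^sub>m k)" using c nrm_diff_commute[of "1\<^sub>m k" k U] by simp
  finally show ?thesis .
qed

lemma nrm_mult_diff_one_le:
  assumes U: "unitary_mat k U" and V: "V \<in> carrier_mat k k"
  shows "nrm (U * V - 1\<^sub>m k) \<le> nrm (U - 1\<^sub>m k) + nrm (V - 1\<^sub>m k)"
proof -
  have c: "U \<in> carrier_mat k k" by (rule unitary_mat_carrier[OF U])
  have "U * V - 1\<^sub>m k = U * (V - 1\<^sub>m k) + (U - 1\<^sub>m k)"
    using c V by (simp add: square_mat_closed square_mat_algebra[where k=k]) (intro eq_matI; simp)
  then have "nrm (U * V - 1\<^sub>m k) \<le> nrm (U * (V - 1\<^sub>m k)) + nrm (U - 1\<^sub>m k)"
    using nrm_triangle[of "U * (V - 1\<^sub>m k)" k "U - 1\<^sub>m k"] c V by (simp add: square_mat_closed)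
  then show ?thesis using nrm_unitary_left[OF _ U, of "V - 1\<^sub>m k"] V by (simp add: square_mat_closed)
qed

lemma nrm_conj_diff_one:
  assumes X: "unitary_mat k X" and W: "W \<in> carrier_mat k k"
  shows "nrm (X * W * mat_adjoint X - 1\<^sub>m k) = nrm (W - 1\<^sub>m k)"
proof -
  have c: "X \<in> carrier_mat k k" by (rule unitary_mat_carrier[OF X])
  have "X * W * mat_adjoint X - 1\<^sub>m k = X * (W - 1\<^sub>m k) * mat_adjoint X"
    using c W by (simp add: square_mat_closed square_mat_algebra[where k=k] unitary_mat_mult_adjoint[OF X])
  then show ?thesis
    using nrm_unitary_invariant[OF _ X unitary_mat_adjoint[OF X], of "W - 1\<^sub>m k"] W
    by (simp add: square_mat_closed)
qed

lemma nrm_adjoint_diff: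
  assumes P: "unitary_mat k P" and W: "unitary_mat k W"
  shows "nrm (mat_adjoint P - mat_adjoint W) = nrm (W - P)"
proof -
  have c: "P \<in> carrier_mat k k" "W \<in> carrier_mat k k" using P W by (simp_all add: unitary_mat_carrier)
  have "mat_adjoint P - mat_adjoint W = mat_adjoint P * (W - P) * mat_adjoint W"
    using c by (simp add: square_mat_closed square_mat_algebra[where k=k] unitary_mat_adjoint_mult[OF P]
        unitary_mat_mult_adjoint[OF W] unitary_mat_adjoint_mult_cancel[OF P])
  then show ?thesis
    using nrm_unitary_invariant[of "W - P" k "mat_adjoint P" "mat_adjoint W"] c
    by (simp add: square_mat_closed unitary_mat_adjoint P W)
qed

lemma nrm_conj_diff_le:
  assumes P: "unitary_mat k P" and W: "unitary_mat k W" and B: "B \<in> carrier_mat k k"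
  shows "nrm (W * B * mat_adjoint W - P * B * mat_adjoint P) \<le> 2 * nrm B * nrm (W - P)"
proof -
  have c: "P \<in> carrier_mat k k" "W \<in> carrier_mat k k" using P W by (simp_all add: unitary_mat_carrier)
  have "W * B * mat_adjoint W - P * B * mat_adjoint P
      = (W - P) * B * mat_adjoint W + P * (B * (mat_adjoint W - mat_adjoint P))"
    using c B by (simp add: square_mat_closed square_mat_algebra[where k=k]) (intro eq_matI; simp)
  also have "nrm \<dots> \<le> nrm ((W - P) * B * mat_adjoint W) + nrm (P * (B * (mat_adjoint W - mat_adjoint P)))"
    using c B by (intro nrm_triangle[where k=k]) (simp_all add: square_mat_closed)
  also have "nrm ((W - P) * B * mat_adjoint W) \<le> nrm (W - P) * nrm B"
    using c B nrm_unitary_right[of "(W - P) * B" k "mat_adjoint W"] nrm_submult[of "W - P" k B]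
    by (simp add: square_mat_closed unitary_mat_adjoint W)
  also have "nrm (P * (B * (mat_adjoint W - mat_adjoint P))) \<le> nrm B * nrm (W - P)"
    using c B nrm_unitary_left[OF _ P, of "B * (mat_adjoint W - mat_adjoint P)"]
      nrm_submult[of B k "mat_adjoint W - mat_adjoint P"] nrm_adjoint_diff[OF W P]
      nrm_diff_commute[of P k W]
    by (simp add: square_mat_closed)
  finally show ?thesis by (simp add: algebra_simps)
qed

lemma lift_defect_le:
  assumes P: "unitary_mat k Pg" "unitary_mat k Ph" "unitary_mat k Pgh"
    and W: "unitary_mat k Wg" "unitary_mat k Wh" "unitary_mat k Wgh"
  shows "nrm (Pg * Ph - Pgh)
    \<le> nrm (Wg - Pg) + nrm (Wh - Ph) + nrm (Wg * Wh - Wgh) + nrm (Wgh - Pgh)"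
proof -
  note u = P[THEN unitary_mat_carrier] W[THEN unitary_mat_carrier]
  have "Pg * Ph - Pgh = - ((Wg - Pg) * Ph + Wg * (Wh - Ph)) + (Wg * Wh - Wgh) + (Wgh - Pgh)"
    using u by (simp add: square_mat_closed square_mat_algebra[where k=k])
      (intro eq_matI; simp add: algebra_simps del: index_mult_mat(1))
  moreover have "nrm ((Wg - Pg) * Ph) = nrm (Wg - Pg)" "nrm (Wg * (Wh - Ph)) = nrm (Wh - Ph)"
    using nrm_unitary_right[OF _ P(2), of "Wg - Pg"] nrm_unitary_left[OF _ W(1), of "Wh - Ph"] u
    by (simp_all add: square_mat_closed)
  ultimately show ?thesis
    using u nrm_triangle[of _ k] nrm_uminus[of _ k] square_mat_closed(1-4)[of _ k]
    by (smt (verit))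
qed

lemma normalized_defect:
  fixes d :: real
  assumes d: "0 \<le> d" and D: "D \<in> carrier_mat k k" and bound: "nrm D \<le> C * d" and C: "0 \<le> C"
  shows "D = complex_of_real d \<cdot>\<^sub>m (if d > 0 then (1 / complex_of_real d) \<cdot>\<^sub>m D else 0\<^sub>m k k)"
    and "nrm (if d > 0 then (1 / complex_of_real d) \<cdot>\<^sub>m D else 0\<^sub>m k k) \<le> C"
proof -
  show "nrm (if d > 0 then (1 / complex_of_real d) \<cdot>\<^sub>m D else 0\<^sub>m k k) \<le> C"
  proof (cases "d > 0")
    case True
    then have "nrm ((1 / complex_of_real d) \<cdot>\<^sub>m D) = nrm D / d"
      using D by (simp add: nrm_smult norm_divide)
    also have "\<dots> \<le> C" using bound True by (simp add: divide_le_eq)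
    finally show ?thesis using True by simp
  qed (use C in simp)
  show "D = complex_of_real d \<cdot>\<^sub>m (if d > 0 then (1 / complex_of_real d) \<cdot>\<^sub>m D else 0\<^sub>m k k)"
  proof (cases "d > 0")
    case False
    then have "nrm D = 0" using bound d nrm_nonneg[OF D] by simp
    then show ?thesis using False D nrm_eq_0_iff[OF D] by (intro eq_matI) auto
  qed (use D in \<open>intro eq_matI; simp\<close>)
qed

end

section \<open>The matrix exponential\<close>

definition single_entry_mat :: "nat \<Rightarrow> nat \<Rightarrow> nat \<Rightarrow> complex mat" where
  "single_entry_mat k i j = mat k k (\<lambda>(a,b). if a = i \<and> b = j then 1 else 0)"

definition entry_prefix_mat :: "nat \<Rightarrow> complex mat \<Rightarrow> nat \<Rightarrow> complex mat" where
  "entry_prefix_mat k M p = mat k k (\<lambda>(a,b). if a * k + b < p then M $$ (a,b) else 0)"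

lemma row_major_index_less: "a < (k::nat) \<Longrightarrow> b < k \<Longrightarrow> a * k + b < k * k"
proof -
  assume "a < k" "b < k"
  then have "a * k + b < (a + 1) * k" by simp
  also have "\<dots> \<le> k * k" using \<open>a < k\<close> by (intro mult_right_mono) auto
  finally show ?thesis .
qed

lemma row_major_index_eq_iff: "b < (k::nat) \<Longrightarrow> a * k + b = p \<longleftrightarrow> a = p div k \<and> b = p mod k"
  by auto

lemma entry_prefix_mat_0: "entry_prefix_mat k M 0 = 0\<^sub>m k k"
  by (rule eq_matI) (simp_all add: entry_prefix_mat_def)

lemma entry_prefix_mat_full: "M \<in> carrier_mat k k \<Longrightarrow> entry_prefix_mat k M (k * k) = M"
  by (rule eq_matI) (auto simp: entry_prefix_mat_def row_major_index_less)

lemma entry_prefix_mat_Suc: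
  "entry_prefix_mat k M (Suc p) = entry_prefix_mat k M p +
     (if p < k * k then M $$ (p div k, p mod k) \<cdot>\<^sub>m single_entry_mat k (p div k) (p mod k) else 0\<^sub>m k k)"
proof (rule eq_matI)
  fix a b assume "a < dim_row (entry_prefix_mat k M p +
     (if p < k * k then M $$ (p div k, p mod k) \<cdot>\<^sub>m single_entry_mat k (p div k) (p mod k) else 0\<^sub>m k k))"
    "b < dim_col (entry_prefix_mat k M p +
     (if p < k * k then M $$ (p div k, p mod k) \<cdot>\<^sub>m single_entry_mat k (p div k) (p mod k) else 0\<^sub>m k k))"
  then have ab: "a < k" "b < k"
    by (simp_all add: entry_prefix_mat_def single_entry_mat_def split: if_split_asm)
  then have "a * k + b = p \<Longrightarrow> p < k * k" using row_major_index_less by blast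
  then show "entry_prefix_mat k M (Suc p) $$ (a, b) = (entry_prefix_mat k M p +
     (if p < k * k then M $$ (p div k, p mod k) \<cdot>\<^sub>m single_entry_mat k (p div k) (p mod k) else 0\<^sub>m k k)) $$ (a, b)"
    using ab row_major_index_eq_iff[OF ab(2)]
    by (auto simp add: entry_prefix_mat_def single_entry_mat_def less_Suc_eq)
qed (simp_all add: entry_prefix_mat_def single_entry_mat_def)

lemma pow_mat_entry_le:
  assumes A: "A \<in> carrier_mat k k" and ij: "i < k" "j < k"
  shows "cmod ((A ^\<^sub>m m) $$ (i,j)) \<le> (\<Sum>a<k. \<Sum>b<k. cmod (A $$ (a,b))) ^ m"
  using ij
proof (induct m arbitrary: i j)
  case 0 then show ?case using A by simp
next
  case (Suc m)
  let ?c = "\<Sum>a<k. \<Sum>b<k. cmod (A $$ (a,b))"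
  have "cmod ((A ^\<^sub>m Suc m) $$ (i,j)) = cmod (\<Sum>l<k. (A ^\<^sub>m m) $$ (i,l) * A $$ (l,j))"
    using A Suc.prems by (simp add: scalar_prod_def atLeast0LessThan)
  also have "\<dots> \<le> (\<Sum>l<k. cmod ((A ^\<^sub>m m) $$ (i,l)) * cmod (A $$ (l,j)))"
    by (rule order_trans[OF norm_sum]) (simp add: norm_mult)
  also have "\<dots> \<le> (\<Sum>l<k. ?c ^ m * cmod (A $$ (l,j)))"
    by (rule sum_mono, rule mult_right_mono) (use Suc in auto)
  also have "\<dots> = ?c ^ m * (\<Sum>l<k. cmod (A $$ (l,j)))" by (simp add: sum_distrib_left)
  also have "\<dots> \<le> ?c ^ m * ?c"
  proof (intro mult_left_mono zero_le_power sum_nonneg)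
    show "(\<Sum>l<k. cmod (A $$ (l,j))) \<le> ?c"
      by (rule sum_mono, rule member_le_sum) (use Suc in auto)
  qed auto
  finally show ?case by (simp add: mult.commute)
qed

lemma mat_exp_entry_summable:
  fixes A :: "complex mat"
  assumes A: "A \<in> carrier_mat k k" and ij: "i < k" "j < k"
  shows "summable (\<lambda>m. (A ^\<^sub>m m) $$ (i,j) / of_nat (fact m :: nat))"
proof (rule summable_comparison_test')
  let ?c = "\<Sum>a<k. \<Sum>b<k. cmod (A $$ (a,b))"
  show "summable (\<lambda>m. inverse (fact m) * ?c ^ m)" by (rule summable_exp)
  show "norm ((A ^\<^sub>m m) $$ (i,j) / of_nat (fact m :: nat)) \<le> inverse (fact m) * ?c ^ m" for m
    using divide_right_mono[OF pow_mat_entry_le[OF A ij, of m], of "fact m"]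
    by (simp add: norm_divide field_simps)
qed

lemma mat_exp_carrier [simp]: "A \<in> carrier_mat k k \<Longrightarrow> mat_exp A \<in> carrier_mat k k"
  unfolding mat_exp_def by simp

definition exp_middle_terms :: "nat \<Rightarrow> complex mat \<Rightarrow> nat \<Rightarrow> complex mat" where
  "exp_middle_terms k A N = mat k k (\<lambda>(i,j). \<Sum>m\<in>{2..<N}. (A ^\<^sub>m m) $$ (i,j) / of_nat (fact m :: nat))"

lemma exp_middle_terms_Suc:
  "A \<in> carrier_mat k k \<Longrightarrow> exp_middle_terms k A (Suc N) = exp_middle_terms k A N +
     (if 2 \<le> N then (1 / of_nat (fact N :: nat)) \<cdot>\<^sub>m (A ^\<^sub>m N) else 0\<^sub>m k k)"
  by (cases "2 \<le> N"; rule eq_matI) (simp_all add: exp_middle_terms_def)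

lemma exp_partial_sum_from_2_le:
  assumes a: "0 \<le> (a::real)"
  shows "(\<Sum>m\<in>{2..<N}. a ^ m / fact m) \<le> exp a - 1 - a"
proof -
  have "(\<Sum>m\<in>{2..<N}. a ^ m / fact m) \<le> (\<Sum>m\<in>{2..<N+2}. a ^ m / fact m)"
    by (rule sum_mono2) (use a in auto)
  also have "\<dots> = (\<Sum>m<N+2. a ^ m / fact m) - 1 - a"
  proof -
    have "{..<N+2} = {0, 1} \<union> {2..<N+2}" by auto
    then show ?thesis by (simp add: sum.union_disjoint)
  qed
  also have "(\<Sum>m<N+2. a ^ m / fact m) \<le> exp a"
    using sum_le_suminf[OF summable_exp[of a], of "{..<N+2}"] exp_converges[of a] a
    by (simp add: sums_iff field_simps)
  finally show ?thesis by simp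
qed

context unitarily_invariant_norm
begin

lemma nrm_entry_prefix_mat_le:
  "nrm (entry_prefix_mat k M p) \<le> (\<Sum>q<p. if q < k * k
     then cmod (M $$ (q div k, q mod k)) * nrm (single_entry_mat k (q div k) (q mod k)) else 0)"
proof (induct p)
  case 0 then show ?case by (simp add: entry_prefix_mat_0)
next
  case (Suc p)
  have carrier: "entry_prefix_mat k M p \<in> carrier_mat k k" "single_entry_mat k i j \<in> carrier_mat k k" for i j
    by (simp_all add: entry_prefix_mat_def single_entry_mat_def)
  show ?case
  proof (cases "p < k * k")
    case True
    then have "nrm (entry_prefix_mat k M (Suc p)) \<le> nrm (entry_prefix_mat k M p)
        + cmod (M $$ (p div k, p mod k)) * nrm (single_entry_mat k (p div k) (p mod k))"
      unfolding entry_prefix_mat_Suc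
      using nrm_triangle[OF carrier(1) smult_carrier_mat[OF carrier(2)]] by (simp add: nrm_smult[OF carrier(2)])
    then show ?thesis using Suc True by simp
  next
    case False
    have "entry_prefix_mat k M p + 0\<^sub>m k k = entry_prefix_mat k M p" using carrier(1) by simp
    then show ?thesis using Suc False by (simp add: entry_prefix_mat_Suc)
  qed
qed

lemma nrm_le_sum_entries:
  "M \<in> carrier_mat k k \<Longrightarrow>
   nrm M \<le> (\<Sum>q<k*k. cmod (M $$ (q div k, q mod k)) * nrm (single_entry_mat k (q div k) (q mod k)))"
  using nrm_entry_prefix_mat_le[of k M "k * k"] by (simp add: entry_prefix_mat_full)

lemma nrm_tendsto_zero_entrywise:
  fixes Ms :: "'b \<Rightarrow> complex mat"
  assumes carrier: "\<And>n. Ms n \<in> carrier_mat k k"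
    and entries: "\<And>i j. i < k \<Longrightarrow> j < k \<Longrightarrow> ((\<lambda>n. Ms n $$ (i,j)) \<longlongrightarrow> 0) F"
  shows "((\<lambda>n. nrm (Ms n)) \<longlongrightarrow> 0) F"
proof (rule tendsto_sandwich[of "\<lambda>n. 0"])
  show "\<forall>\<^sub>F n in F. 0 \<le> nrm (Ms n)" using nrm_nonneg[OF carrier] by simp
  show "\<forall>\<^sub>F n in F. nrm (Ms n) \<le>
      (\<Sum>q<k*k. cmod (Ms n $$ (q div k, q mod k)) * nrm (single_entry_mat k (q div k) (q mod k)))"
    using nrm_le_sum_entries[OF carrier] by simp
  show "((\<lambda>n. \<Sum>q<k*k. cmod (Ms n $$ (q div k, q mod k)) * nrm (single_entry_mat k (q div k) (q mod k)))
      \<longlongrightarrow> 0) F"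
  proof (rule tendsto_null_sum)
    fix q assume q: "q \<in> {..<k*k}"
    then have "0 < k" by (cases k) auto
    with q have "q div k < k" "q mod k < k" by (auto simp: less_mult_imp_div_less)
    then have "((\<lambda>n. cmod (Ms n $$ (q div k, q mod k))) \<longlongrightarrow> 0) F"
      using entries tendsto_norm_zero by blast
    then show "((\<lambda>n. cmod (Ms n $$ (q div k, q mod k)) * nrm (single_entry_mat k (q div k) (q mod k)))
        \<longlongrightarrow> 0) F"
      by (rule tendsto_mult_left_zero)
  qed
qed simp

lemma nrm_pow_mat_le: "A \<in> carrier_mat k k \<Longrightarrow> 1 \<le> m \<Longrightarrow> nrm (A ^\<^sub>m m) \<le> nrm A ^ m"
proof (induct m)
  case (Suc m)
  show ?case
  proof (cases "m = 0")
    case False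
    have "nrm (A ^\<^sub>m Suc m) \<le> nrm (A ^\<^sub>m m) * nrm A"
      using Suc.prems nrm_submult[of "A ^\<^sub>m m" k A] by simp
    also have "\<dots> \<le> nrm A ^ m * nrm A"
      by (rule mult_right_mono) (use Suc False nrm_nonneg in auto)
    finally show ?thesis by (simp add: mult.commute)
  qed (use Suc in simp)
qed simp

lemma nrm_exp_middle_terms_le:
  "A \<in> carrier_mat k k \<Longrightarrow> nrm (exp_middle_terms k A N) \<le> (\<Sum>m\<in>{2..<N}. nrm A ^ m / fact m)"
proof (induct N)
  case 0
  have "exp_middle_terms k A 0 = 0\<^sub>m k k" by (rule eq_matI) (simp_all add: exp_middle_terms_def)
  then show ?case by simp
next
  case (Suc N)
  have carrier: "exp_middle_terms k A N \<in> carrier_mat k k" by (simp add: exp_middle_terms_def)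
  show ?case
  proof (cases "2 \<le> N")
    case True
    have "nrm (exp_middle_terms k A (Suc N))
        \<le> nrm (exp_middle_terms k A N) + nrm ((1 / of_nat (fact N :: nat)) \<cdot>\<^sub>m (A ^\<^sub>m N))"
      unfolding exp_middle_terms_Suc[OF Suc.prems] using True carrier Suc.prems
      by (simp add: nrm_triangle)
    also have "nrm ((1 / of_nat (fact N :: nat)) \<cdot>\<^sub>m (A ^\<^sub>m N)) = nrm (A ^\<^sub>m N) / fact N"
      using Suc.prems nrm_smult[of "A ^\<^sub>m N" k] by (simp add: norm_divide)
    also have "\<dots> \<le> nrm A ^ N / fact N"
      by (rule divide_right_mono[OF nrm_pow_mat_le[OF Suc.prems]]) (use True in auto)
    finally show ?thesis using Suc True by simp
  next
    case False
    then have "exp_middle_terms k A (Suc N) = exp_middle_terms k A N"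
      unfolding exp_middle_terms_Suc[OF Suc.prems] using carrier by simp
    then show ?thesis using Suc False by simp
  qed
qed

text \<open>The tails of the exponential series tend to zero entrywise, hence in norm; the middle
  terms are bounded by the scalar series.\<close>
lemma nrm_mat_exp_remainder_le:
  assumes A: "A \<in> carrier_mat k k"
  shows "nrm (mat_exp A - 1\<^sub>m k - A) \<le> exp (nrm A) - 1 - nrm A"
proof -
  define tail where "tail N = mat_exp A - 1\<^sub>m k - A - exp_middle_terms k A (N + 2)" for N
  have carrier: "mat_exp A \<in> carrier_mat k k" "exp_middle_terms k A N \<in> carrier_mat k k" for N
    using A by (simp_all add: exp_middle_terms_def)
  have tail_carrier: "tail N \<in> carrier_mat k k" for N
    unfolding tail_def using carrier A by (simp add: square_mat_closed)
  have tail_lim: "((\<lambda>N. nrm (tail N)) \<longlongrightarrow> 0) sequentially"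
  proof (rule nrm_tendsto_zero_entrywise[OF tail_carrier])
    fix i j assume ij: "i < k" "j < k"
    let ?t = "\<lambda>m. (A ^\<^sub>m m) $$ (i,j) / of_nat (fact m :: nat)"
    have "tail N $$ (i,j) = suminf ?t - (\<Sum>m<N+2. ?t m)" for N
    proof -
      have "{..<N+2} = {0, 1} \<union> {2..<N+2}" by auto
      then have "(\<Sum>m<N+2. ?t m) = ?t 0 + ?t 1 + (\<Sum>m\<in>{2..<N+2}. ?t m)"
        by (simp add: sum.union_disjoint)
      then show ?thesis
        unfolding tail_def using A ij by (simp add: mat_exp_def exp_middle_terms_def)
    qed
    moreover have "(\<lambda>N. \<Sum>m<N+2. ?t m) \<longlonglongrightarrow> suminf ?t"
      using summable_LIMSEQ[OF mat_exp_entry_summable[OF A ij]] by (rule LIMSEQ_ignore_initial_segment)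
    then have "(\<lambda>N. suminf ?t - (\<Sum>m<N+2. ?t m)) \<longlonglongrightarrow> 0"
      using tendsto_diff[OF tendsto_const[of "suminf ?t"]] by fastforce
    ultimately show "((\<lambda>N. tail N $$ (i,j)) \<longlongrightarrow> 0) sequentially" by simp
  qed
  have bound: "nrm (mat_exp A - 1\<^sub>m k - A) \<le> nrm (tail N) + (exp (nrm A) - 1 - nrm A)" for N
  proof -
    have "mat_exp A - 1\<^sub>m k - A = tail N + exp_middle_terms k A (N + 2)"
      unfolding tail_def using carrier(1) carrier(2)[of "N + 2"] A by (intro eq_matI) auto
    then have "nrm (mat_exp A - 1\<^sub>m k - A) \<le> nrm (tail N) + nrm (exp_middle_terms k A (N + 2))"
      using nrm_triangle[OF tail_carrier carrier(2)] by simp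
    also have "nrm (exp_middle_terms k A (N + 2)) \<le> exp (nrm A) - 1 - nrm A"
      using nrm_exp_middle_terms_le[OF A] exp_partial_sum_from_2_le[OF nrm_nonneg[OF A]] order_trans
      by blast
    finally show ?thesis by simp
  qed
  have "(\<lambda>N. nrm (tail N) + (exp (nrm A) - 1 - nrm A)) \<longlonglongrightarrow> exp (nrm A) - 1 - nrm A"
    using tendsto_add[OF tail_lim tendsto_const] by simp
  then show ?thesis
    by (rule LIMSEQ_le_const) (use bound in auto)
qed

lemma nrm_mat_exp_remainder_le_sq:
  assumes A: "A \<in> carrier_mat k k" and small: "nrm A \<le> 1"
  shows "nrm (mat_exp A - 1\<^sub>m k - A) \<le> nrm A ^ 2"
  using nrm_mat_exp_remainder_le[OF A] exp_bound[OF nrm_nonneg[OF A] small] by simp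

lemma nrm_exp_smult_remainder_le:
  fixes d :: real
  assumes B: "B \<in> carrier_mat k k" and d: "0 \<le> d" and small: "d * nrm B \<le> 1"
  shows "nrm (mat_exp ((- complex_of_real d) \<cdot>\<^sub>m B) - 1\<^sub>m k + complex_of_real d \<cdot>\<^sub>m B) \<le> (d * nrm B)\<^sup>2"
proof -
  have "nrm ((- complex_of_real d) \<cdot>\<^sub>m B) = d * nrm B" using B d by (simp add: nrm_smult)
  moreover have "mat_exp ((- complex_of_real d) \<cdot>\<^sub>m B) - 1\<^sub>m k + complex_of_real d \<cdot>\<^sub>m B
      = mat_exp ((- complex_of_real d) \<cdot>\<^sub>m B) - 1\<^sub>m k - (- complex_of_real d) \<cdot>\<^sub>m B"
    using B by (intro eq_matI) simp_all
  ultimately show ?thesis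
    using nrm_mat_exp_remainder_le_sq[of "(- complex_of_real d) \<cdot>\<^sub>m B" k] B small by simp
qed

lemma nrm_exp_smult_diff_one_le:
  fixes d :: real
  assumes B: "B \<in> carrier_mat k k" and d: "0 \<le> d" and small: "d * nrm B \<le> 1"
  shows "nrm (mat_exp ((- complex_of_real d) \<cdot>\<^sub>m B) - 1\<^sub>m k) \<le> 2 * (d * nrm B)"
proof -
  let ?E = "mat_exp ((- complex_of_real d) \<cdot>\<^sub>m B)" and ?dB = "complex_of_real d \<cdot>\<^sub>m B"
  have "?E - 1\<^sub>m k = (?E - 1\<^sub>m k + ?dB) - ?dB"
    using B by (intro eq_matI) auto
  then have "nrm (?E - 1\<^sub>m k) \<le> (d * nrm B)\<^sup>2 + d * nrm B"
    using nrm_diff_le[of "?E - 1\<^sub>m k + ?dB" k ?dB] nrm_smult[OF B, of "complex_of_real d"]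
      nrm_exp_smult_remainder_le[OF B d small] B d
    by (simp add: square_mat_closed)
  moreover have "(d * nrm B)\<^sup>2 \<le> d * nrm B"
    using small d nrm_nonneg[OF B] by (simp add: power2_eq_square mult_left_le_one_le)
  ultimately show ?thesis by simp
qed

end

section \<open>Words and presentations\<close>

lemma word_eval_Nil [simp]: "word_eval k f [] = 1\<^sub>m k"
  unfolding word_eval_def by simp

lemma word_eval_Cons [simp]:
  "word_eval k f ((s,b) # w) = (if b then f s else mat_adjoint (f s)) * word_eval k f w"
  unfolding word_eval_def by simp

lemma words_Nil [simp]: "[] \<in> words S"
  unfolding words_def by simp

lemma words_Cons [simp]: "(s,b) # w \<in> words S \<longleftrightarrow> s \<in> S \<and> w \<in> words S"
  unfolding words_def by auto

lemma words_append [simp]: "u @ v \<in> words S \<longleftrightarrow> u \<in> words S \<and> v \<in> words S"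
  unfolding words_def by auto

lemma word_inv_Nil [simp]: "word_inv [] = []"
  unfolding word_inv_def by simp

lemma word_inv_Cons [simp]: "word_inv ((s,b) # w) = word_inv w @ [(s, \<not> b)]"
  unfolding word_inv_def by simp

lemma words_word_inv [simp]: "w \<in> words S \<Longrightarrow> word_inv w \<in> words S"
  by (induct w) auto

lemma letter_unitary:
  "\<forall>s\<in>S. unitary_mat k (f s) \<Longrightarrow> s \<in> S \<Longrightarrow> unitary_mat k (if b then f s else mat_adjoint (f s))"
  by (auto simp: unitary_mat_adjoint)

lemma word_eval_unitary:
  "\<forall>s\<in>S. unitary_mat k (f s) \<Longrightarrow> w \<in> words S \<Longrightarrow> unitary_mat k (word_eval k f w)"
proof (induct w)
  case (Cons x w)
  then show ?case by (cases x) (auto intro!: unitary_mat_mult unitary_mat_adjoint)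
qed (simp add: unitary_mat_one)

lemma word_eval_carrier:
  "\<forall>s\<in>S. unitary_mat k (f s) \<Longrightarrow> w \<in> words S \<Longrightarrow> word_eval k f w \<in> carrier_mat k k"
  by (rule unitary_mat_carrier[OF word_eval_unitary])

lemma word_eval_append:
  assumes f: "\<forall>s\<in>S. unitary_mat k (f s)"
  shows "u \<in> words S \<Longrightarrow> v \<in> words S \<Longrightarrow> word_eval k f (u @ v) = word_eval k f u * word_eval k f v"
proof (induct u)
  case Nil then show ?case using word_eval_carrier[OF f] by (simp add: square_mat_algebra[where k=k])
next
  case (Cons x u)
  obtain s b where x: "x = (s,b)" by (cases x)
  have "(if b then f s else mat_adjoint (f s)) \<in> carrier_mat k k"
    using Cons.prems x letter_unitary[OF f] unitary_mat_carrier by simp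
  then show ?case
    using Cons x word_eval_carrier[OF f] by (simp add: square_mat_algebra(7)[where k=k])
qed

lemma word_eval_word_inv:
  assumes f: "\<forall>s\<in>S. unitary_mat k (f s)"
  shows "w \<in> words S \<Longrightarrow> word_eval k f (word_inv w) = mat_adjoint (word_eval k f w)"
proof (induct w)
  case (Cons x w)
  obtain s b where x: "x = (s,b)" by (cases x)
  let ?L = "if b then f s else mat_adjoint (f s)"
  have L: "f s \<in> carrier_mat k k" "?L \<in> carrier_mat k k"
    and w: "w \<in> words S" "word_eval k f w \<in> carrier_mat k k"
    using Cons.prems x f unitary_mat_carrier word_eval_carrier[OF f] by auto
  have "word_eval k f (word_inv (x # w)) = mat_adjoint (word_eval k f w) * mat_adjoint ?L"
    using Cons.hyps[OF w(1)] Cons.prems x L w word_eval_append[OF f, of "word_inv w" "[(s, \<not> b)]"]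
    by (cases b) (simp_all add: square_mat_algebra(10)[where k=k])
  also have "\<dots> = mat_adjoint (word_eval k f (x # w))"
    using L w x by (simp add: mat_adjoint_mult)
  finally show ?case .
qed simp

lemma word_eval_cancel_pair:
  assumes f: "\<forall>s\<in>S. unitary_mat k (f s)" and s: "s \<in> S" and uv: "u \<in> words S" "v \<in> words S"
  shows "word_eval k f (u @ (s,b) # (s,\<not> b) # v) = word_eval k f (u @ v)"
proof -
  let ?L = "if b then f s else mat_adjoint (f s)"
  have L: "unitary_mat k ?L" by (rule letter_unitary[OF f s])
  have "word_eval k f [(s,b),(s,\<not> b)] = ?L * mat_adjoint ?L"
    using f s unitary_mat_carrier by (cases b) (simp_all add: square_mat_algebra(10)[where k=k])
  then have pair: "word_eval k f [(s,b),(s,\<not> b)] = 1\<^sub>m k"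
    by (simp add: unitary_mat_mult_adjoint[OF L])
  have "word_eval k f (u @ [(s,b),(s,\<not> b)] @ v)
      = word_eval k f u * (word_eval k f [(s,b),(s,\<not> b)] * word_eval k f v)"
    using s uv by (simp only: word_eval_append[OF f] words_append words_Cons words_Nil simp_thms)
  then show ?thesis
    unfolding pair using uv word_eval_carrier[OF f]
    by (simp add: square_mat_algebra(11)[where k=k] word_eval_append[OF f])
qed

lemma rel_triv_words:
  assumes "R \<subseteq> words S"
  shows "w \<in> rel_triv S R \<Longrightarrow> w \<in> words S"
  by (induct rule: rel_triv.induct) (use assms in auto)

lemma deficiency_nonneg: "finite R \<Longrightarrow> 0 \<le> deficiency nrm k R f"
  unfolding deficiency_def by (rule Max_ge) auto

lemma deficiency_ge: "finite R \<Longrightarrow> r \<in> R \<Longrightarrow> nrm (word_eval k f r - 1\<^sub>m k) \<le> deficiency nrm k R f"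
  unfolding deficiency_def by (rule Max_ge) auto

lemma presentation_word_inv:
  assumes P: "is_presentation G S R \<pi>"
  shows "w \<in> words S \<Longrightarrow> \<pi> (word_inv w) = inv\<^bsub>G\<^esub> (\<pi> w)"
proof (induct w)
  case Nil
  then show ?case using P unfolding is_presentation_def by (simp add: group.is_monoid monoid.inv_one)
next
  case (Cons x w)
  obtain s b where x: "x = (s,b)" by (cases x)
  have G: "group G" and img: "\<pi> ` words S = carrier G"
    and hom: "\<forall>u \<in> words S. \<forall>v \<in> words S. \<pi> (u @ v) = \<pi> u \<otimes>\<^bsub>G\<^esub> \<pi> v"
    and letter: "\<forall>s \<in> S. \<pi> [(s, False)] = inv\<^bsub>G\<^esub> (\<pi> [(s, True)])"
    using P unfolding is_presentation_def by blast+
  have s: "s \<in> S" "w \<in> words S" using Cons x by auto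
  then have in_G: "\<pi> [(s, b)] \<in> carrier G" "\<pi> [(s, True)] \<in> carrier G" "\<pi> w \<in> carrier G"
    using img by auto
  have letter_inv: "\<pi> [(s, \<not> b)] = inv\<^bsub>G\<^esub> (\<pi> [(s, b)])"
    using letter s in_G G by (cases b) (simp_all add: group.inv_inv)
  have "\<pi> (word_inv (x # w)) = inv\<^bsub>G\<^esub> (\<pi> w) \<otimes>\<^bsub>G\<^esub> inv\<^bsub>G\<^esub> (\<pi> [(s, b)])"
    using hom s Cons.hyps letter_inv x by simp
  also have "\<dots> = inv\<^bsub>G\<^esub> (\<pi> [(s, b)] \<otimes>\<^bsub>G\<^esub> \<pi> w)"
    using G in_G by (simp add: group.inv_mult_group)
  also have "\<pi> [(s, b)] \<otimes>\<^bsub>G\<^esub> \<pi> w = \<pi> (x # w)"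
    using hom s x by (metis append_Cons append_Nil words_Cons words_Nil)
  finally show ?case .
qed

lemma presentation_section_relator:
  assumes P: "is_presentation G S R \<pi>"
    and sec: "\<forall>g \<in> carrier G. \<sigma> g \<in> words S \<and> \<pi> (\<sigma> g) = g"
    and g: "g \<in> carrier G" and h: "h \<in> carrier G"
  shows "\<sigma> (g \<otimes>\<^bsub>G\<^esub> h) @ word_inv (\<sigma> g @ \<sigma> h) \<in> rel_triv S R"
proof -
  have G: "group G"
    and hom: "\<forall>u \<in> words S. \<forall>v \<in> words S. \<pi> (u @ v) = \<pi> u \<otimes>\<^bsub>G\<^esub> \<pi> v"
    and kern: "\<forall>w \<in> words S. \<pi> w = \<one>\<^bsub>G\<^esub> \<longleftrightarrow> w \<in> rel_triv S R"
    using P unfolding is_presentation_def by blast+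
  have gh: "g \<otimes>\<^bsub>G\<^esub> h \<in> carrier G" using G g h by (simp add: group.is_monoid monoid.m_closed)
  have w: "\<sigma> g \<in> words S" "\<sigma> h \<in> words S" "\<sigma> (g \<otimes>\<^bsub>G\<^esub> h) \<in> words S" using sec g h gh by auto
  have "\<pi> (\<sigma> (g \<otimes>\<^bsub>G\<^esub> h) @ word_inv (\<sigma> g @ \<sigma> h)) = (g \<otimes>\<^bsub>G\<^esub> h) \<otimes>\<^bsub>G\<^esub> inv\<^bsub>G\<^esub> (g \<otimes>\<^bsub>G\<^esub> h)"
    using hom w presentation_word_inv[OF P, of "\<sigma> g @ \<sigma> h"] sec g h gh by simp
  also have "\<dots> = \<one>\<^bsub>G\<^esub>" using G gh by (simp add: group.r_inv)
  finally show ?thesis using kern w by simp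
qed

context unitarily_invariant_norm
begin

lemma rel_triv_word_eval_close_to_one:
  assumes RS: "R \<subseteq> words S" and fin: "finite R" and w: "w \<in> rel_triv S R"
  shows "\<exists>C\<ge>0. \<forall>k f. (\<forall>s\<in>S. unitary_mat k (f s)) \<longrightarrow>
           nrm (word_eval k f w - 1\<^sub>m k) \<le> C * deficiency nrm k R f"
  using w
proof (induct rule: rel_triv.induct)
  case nil
  show ?case by (intro exI[of _ 0]) (simp add: minus_r_inv_mat[OF one_carrier_mat])
next
  case (rel r)
  show ?case by (intro exI[of _ 1]) (simp add: deficiency_ge[OF fin rel])
next
  case (rel_inv r)
  then have "r \<in> words S" using RS by auto
  then show ?case
    by (intro exI[of _ 1])
      (simp add: word_eval_word_inv nrm_adjoint_diff_one word_eval_unitary deficiency_ge[OF fin rel_inv])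
next
  case (app u v)
  then obtain Cu Cv where "Cu \<ge> 0" "Cv \<ge> 0"
    and "\<forall>k f. (\<forall>s\<in>S. unitary_mat k (f s)) \<longrightarrow> nrm (word_eval k f u - 1\<^sub>m k) \<le> Cu * deficiency nrm k R f"
    and "\<forall>k f. (\<forall>s\<in>S. unitary_mat k (f s)) \<longrightarrow> nrm (word_eval k f v - 1\<^sub>m k) \<le> Cv * deficiency nrm k R f"
    by blast
  moreover have "u \<in> words S" "v \<in> words S" using rel_triv_words[OF RS] app by auto
  ultimately show ?case
    by (intro exI[of _ "Cu + Cv"])
      (fastforce simp: word_eval_append distrib_right word_eval_unitary word_eval_carrier
        intro: order_trans[OF nrm_mult_diff_one_le] add_mono)
next
  case (conj w x)
  then obtain C where "C \<ge> 0"
    and C: "\<forall>k f. (\<forall>s\<in>S. unitary_mat k (f s)) \<longrightarrow>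
      nrm (word_eval k f w - 1\<^sub>m k) \<le> C * deficiency nrm k R f"
    by blast
  have w: "w \<in> words S" using rel_triv_words[OF RS] conj by auto
  show ?case
  proof (intro exI[of _ C] conjI allI impI)
    fix k f assume f: "\<forall>s\<in>S. unitary_mat k (f s)"
    have "word_eval k f (x @ w @ word_inv x)
        = word_eval k f x * word_eval k f w * mat_adjoint (word_eval k f x)"
      using w conj.hyps(3) word_eval_carrier[OF f]
      by (simp add: word_eval_append[OF f] word_eval_word_inv[OF f] square_mat_algebra(7)[where k=k])
    then show "nrm (word_eval k f (x @ w @ word_inv x) - 1\<^sub>m k) \<le> C * deficiency nrm k R f"
      using nrm_conj_diff_one[OF word_eval_unitary[OF f conj.hyps(3)] word_eval_carrier[OF f w]] C f
      by simp
  qed fact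
next
  case (ins u v s b)
  moreover have "u \<in> words S" "v \<in> words S" using rel_triv_words[OF RS ins(1)] by auto
  ultimately show ?case by (simp add: word_eval_cancel_pair)
next
  case (del u s b v)
  moreover have "u \<in> words S" "v \<in> words S" "s \<in> S" using rel_triv_words[OF RS del(1)] by auto
  ultimately show ?case by (simp add: word_eval_cancel_pair)
qed

lemma section_word_eval_defect:
  assumes P: "is_presentation G S R \<pi>"
    and sec: "\<forall>g \<in> carrier G. \<sigma> g \<in> words S \<and> \<pi> (\<sigma> g) = g"
    and g: "g \<in> carrier G" and h: "h \<in> carrier G"
  shows "\<exists>C\<ge>0. \<forall>k f. (\<forall>s\<in>S. unitary_mat k (f s)) \<longrightarrow>
     nrm (word_eval k f (\<sigma> g) * word_eval k f (\<sigma> h) - word_eval k f (\<sigma> (g \<otimes>\<^bsub>G\<^esub> h)))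
       \<le> C * deficiency nrm k R f"
proof -
  have "R \<subseteq> words S" "finite R" "group G" using P unfolding is_presentation_def by blast+
  then obtain C where "C \<ge> 0" and C: "\<forall>k f. (\<forall>s\<in>S. unitary_mat k (f s)) \<longrightarrow>
      nrm (word_eval k f (\<sigma> (g \<otimes>\<^bsub>G\<^esub> h) @ word_inv (\<sigma> g @ \<sigma> h)) - 1\<^sub>m k) \<le> C * deficiency nrm k R f"
    using rel_triv_word_eval_close_to_one presentation_section_relator[OF P sec g h] by blast
  have w: "\<sigma> g \<in> words S" "\<sigma> h \<in> words S" "\<sigma> (g \<otimes>\<^bsub>G\<^esub> h) \<in> words S"
    using sec g h \<open>group G\<close> by (auto simp: group.is_monoid monoid.m_closed)
  have "nrm (word_eval k f (\<sigma> g) * word_eval k f (\<sigma> h) - word_eval k f (\<sigma> (g \<otimes>\<^bsub>G\<^esub> h)))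
      \<le> C * deficiency nrm k R f" if f: "\<forall>s\<in>S. unitary_mat k (f s)" for k f
  proof -
    let ?Wg = "word_eval k f (\<sigma> g)" and ?Wh = "word_eval k f (\<sigma> h)"
      and ?Wgh = "word_eval k f (\<sigma> (g \<otimes>\<^bsub>G\<^esub> h))"
    have U: "unitary_mat k (?Wg * ?Wh)" "unitary_mat k ?Wgh"
      using w f by (simp_all add: unitary_mat_mult word_eval_unitary)
    have c: "?Wg \<in> carrier_mat k k" "?Wh \<in> carrier_mat k k" "?Wgh \<in> carrier_mat k k"
      using w f by (simp_all add: word_eval_carrier)
    define D where "D = ?Wgh * mat_adjoint (?Wg * ?Wh) - 1\<^sub>m k"
    have D: "D \<in> carrier_mat k k" unfolding D_def using c by (simp add: square_mat_closed)
    have "?Wg * ?Wh - ?Wgh = - (D * (?Wg * ?Wh))"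
      unfolding D_def using c
      by (simp add: square_mat_closed square_mat_algebra[where k=k] unitary_mat_adjoint_mult[OF U(1)])
        (intro eq_matI; simp)
    then have "nrm (?Wg * ?Wh - ?Wgh) = nrm D"
      using nrm_uminus[of "D * (?Wg * ?Wh)" k] nrm_unitary_right[OF D U(1)] D c
      by (simp add: square_mat_closed)
    also have "D = word_eval k f (\<sigma> (g \<otimes>\<^bsub>G\<^esub> h) @ word_inv (\<sigma> g @ \<sigma> h)) - 1\<^sub>m k"
      unfolding D_def using w f by (simp add: word_eval_append word_eval_word_inv)
    finally show ?thesis using C f by simp
  qed
  then show ?thesis using \<open>C \<ge> 0\<close> by blast
qed

end

section \<open>Estimates for the twisted maps\<close>

text \<open>Writing \<open>E = 1 + L\<close> with \<open>L = -d B + R\<close>: the product of two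
  near-identity factors splits into the linear part, the exponential remainders R, and
  the product of the two L.\<close>
lemma twisted_product_expansion:
  fixes Eg Eh Egh Pg Ph Pgh Bg Bh Bgh :: "complex mat" and d :: complex
  assumes "Eg \<in> carrier_mat k k" "Eh \<in> carrier_mat k k" "Egh \<in> carrier_mat k k"
    "Pg \<in> carrier_mat k k" "Ph \<in> carrier_mat k k" "Pgh \<in> carrier_mat k k"
    "Bg \<in> carrier_mat k k" "Bh \<in> carrier_mat k k" "Bgh \<in> carrier_mat k k"
  shows "Egh * Pgh - Eg * Pg * (Eh * Ph)
    = - (Pg * Ph - Pgh + d \<cdot>\<^sub>m (Bgh * Pgh - Bg * Pg * Ph - Pg * Bh * Ph))
      + ((Egh - 1\<^sub>m k + d \<cdot>\<^sub>m Bgh) * Pgh - (Eg - 1\<^sub>m k + d \<cdot>\<^sub>m Bg) * Pg * Ph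
         - Pg * (Eh - 1\<^sub>m k + d \<cdot>\<^sub>m Bh) * Ph)
      - (Eg - 1\<^sub>m k) * Pg * ((Eh - 1\<^sub>m k) * Ph)"
  using assms
  by (simp add: square_mat_closed square_mat_algebra[where k=k])
    (intro eq_matI; simp add: algebra_simps del: index_mult_mat(1))

lemma first_order_defect_mult_adjoint:
  fixes d :: complex
  assumes P: "unitary_mat k Pg" "Ph \<in> carrier_mat k k" "unitary_mat k Pgh"
    and W: "Wg \<in> carrier_mat k k" "Wgh \<in> carrier_mat k k"
    and B: "Bg \<in> carrier_mat k k" "Bh \<in> carrier_mat k k" "Bgh \<in> carrier_mat k k"
    and D: "D = Pg * Ph - Pgh"
  shows "(D + d \<cdot>\<^sub>m (Bgh * Pgh - Bg * Pg * Ph - Pg * Bh * Ph)) * mat_adjoint Pgh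
      = (D * mat_adjoint Wgh - d \<cdot>\<^sub>m (Wg * Bh * mat_adjoint Wg - Bgh + Bg))
        + D * (mat_adjoint Pgh - mat_adjoint Wgh) - d \<cdot>\<^sub>m (Bg * D * mat_adjoint Pgh)
        + d \<cdot>\<^sub>m (Wg * Bh * mat_adjoint Wg - Pg * Bh * mat_adjoint Pg)
        - d \<cdot>\<^sub>m (Pg * Bh * mat_adjoint Pg * D * mat_adjoint Pgh)"
  unfolding D using P(2) W B P(1,3)[THEN unitary_mat_carrier]
  by (simp add: square_mat_closed square_mat_algebra[where k=k] unitary_mat_adjoint_mult[OF P(1)]
      unitary_mat_mult_adjoint[OF P(3)] unitary_mat_adjoint_mult_cancel[OF P(1)])
    (intro eq_matI; simp add: algebra_simps del: index_mult_mat(1))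

lemma small_o_UI:
  assumes x: "\<And>n. 0 \<le> x n" and d: "\<And>n. 0 \<le> d n"
    and \<epsilon>: "(\<epsilon> \<longlongrightarrow> 0) F" and le: "eventually (\<lambda>n. x n \<le> d n * \<epsilon> n) F"
  shows "small_o_U F x d"
proof -
  define ratio where "ratio n = (if d n > 0 then x n / d n else 0)" for n
  have ratio: "eventually (\<lambda>n. ratio n \<le> \<bar>\<epsilon> n\<bar> \<and> x n = ratio n * d n) F"
    using le
  proof eventually_elim
    case (elim n)
    show ?case
    proof (cases "d n > 0")
      case True
      then have "x n / d n \<le> \<epsilon> n" using elim by (simp add: pos_divide_le_eq mult.commute)
      then show ?thesis using True by (simp add: ratio_def)
    next
      case False
      then have "d n = 0" using d[of n] by simp
      then show ?thesis using elim x[of n] by (simp add: ratio_def)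
    qed
  qed
  have ratio_nonneg: "0 \<le> ratio n" for n using x d by (simp add: ratio_def)
  have "(ratio \<longlongrightarrow> 0) F"
    using ratio ratio_nonneg
    by (intro tendsto_sandwich[OF _ _ tendsto_const tendsto_rabs_zero[OF \<epsilon>]]) (auto elim: eventually_mono)
  then show ?thesis
    unfolding small_o_U_def using ratio ratio_nonneg
    by (intro exI[of _ ratio] conjI allI) (auto elim: eventually_mono)
qed

lemma eventually_le_mult_nonneg_const:
  assumes "\<exists>C. eventually (\<lambda>n. x n \<le> C * d n) F" and d: "\<And>n. 0 \<le> (d n :: real)"
  obtains C where "0 \<le> C" "eventually (\<lambda>n. x n \<le> C * d n) F"
proof -
  from assms(1) obtain C where "eventually (\<lambda>n. x n \<le> C * d n) F" by blast
  then have "eventually (\<lambda>n. x n \<le> \<bar>C\<bar> * d n) F"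
    by (rule eventually_mono) (meson abs_ge_self d mult_right_mono order_trans)
  then show ?thesis by (rule that[OF abs_ge_zero])
qed

lemma tendsto_zero_if_eventually_le_mult:
  assumes "(d \<longlongrightarrow> 0) F" "\<And>n. 0 \<le> (x n :: real)" "eventually (\<lambda>n. x n \<le> C * d n) F"
  shows "(x \<longlongrightarrow> 0) F"
  using assms(2,3)
  by (intro tendsto_sandwich[OF _ _ tendsto_const tendsto_mult_right_zero[OF assms(1)]]) auto

lemma eventually_mult_le_one:
  assumes "(d \<longlongrightarrow> 0) F" "\<And>n. 0 \<le> d n" "0 \<le> (K :: real)"
  shows "eventually (\<lambda>n. d n * K \<le> 1) F"
proof -
  have "eventually (\<lambda>n. d n < 1 / (K + 1)) F"
    using order_tendstoD(2)[OF assms(1)] assms(3) by simp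
  then show ?thesis
  proof (rule eventually_mono)
    fix n assume "d n < 1 / (K + 1)"
    then have "d n * K + d n < 1" using assms(3) by (simp add: less_divide_eq ring_distribs)
    then show "d n * K \<le> 1" using assms(2)[of n] by linarith
  qed
qed

context unitarily_invariant_norm
begin

lemma nrm_first_order_defect_le:
  fixes d :: real
  assumes P: "unitary_mat k Pg" "unitary_mat k Ph" "unitary_mat k Pgh"
    and W: "unitary_mat k Wg" "unitary_mat k Wgh"
    and B: "Bg \<in> carrier_mat k k" "Bh \<in> carrier_mat k k" "Bgh \<in> carrier_mat k k"
    and c: "c \<in> carrier_mat k k" and d: "0 \<le> d"
    and defect: "Pg * Ph - Pgh = complex_of_real d \<cdot>\<^sub>m c"
  shows "nrm (Pg * Ph - Pgh + complex_of_real d \<cdot>\<^sub>m (Bgh * Pgh - Bg * Pg * Ph - Pg * Bh * Ph))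
    \<le> d * (nrm (c * mat_adjoint Wgh - (Wg * Bh * mat_adjoint Wg - Bgh + Bg))
           + nrm c * nrm (Wgh - Pgh) + 2 * nrm Bh * nrm (Wg - Pg) + d * (nrm Bg + nrm Bh) * nrm c)"
proof -
  let ?d = "complex_of_real d"
  define D where "D = Pg * Ph - Pgh"
  define Z where "Z = c * mat_adjoint Wgh - (Wg * Bh * mat_adjoint Wg - Bgh + Bg)"
  note PW = P W
  note u = PW[THEN unitary_mat_carrier] PW[THEN unitary_mat_adjoint, THEN unitary_mat_carrier]
  have Dc: "D \<in> carrier_mat k k" unfolding D_def using u by (simp add: square_mat_closed)
  have D: "D = ?d \<cdot>\<^sub>m c" using defect unfolding D_def .
  have "(D + ?d \<cdot>\<^sub>m (Bgh * Pgh - Bg * Pg * Ph - Pg * Bh * Ph)) * mat_adjoint Pgh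
      = (D * mat_adjoint Wgh - ?d \<cdot>\<^sub>m (Wg * Bh * mat_adjoint Wg - Bgh + Bg))
        + D * (mat_adjoint Pgh - mat_adjoint Wgh) - ?d \<cdot>\<^sub>m (Bg * D * mat_adjoint Pgh)
        + ?d \<cdot>\<^sub>m (Wg * Bh * mat_adjoint Wg - Pg * Bh * mat_adjoint Pg)
        - ?d \<cdot>\<^sub>m (Pg * Bh * mat_adjoint Pg * D * mat_adjoint Pgh)"
    using u B by (intro first_order_defect_mult_adjoint[OF P(1) _ P(3)] D_def) simp_all
  also have "D * mat_adjoint Wgh - ?d \<cdot>\<^sub>m (Wg * Bh * mat_adjoint Wg - Bgh + Bg) = ?d \<cdot>\<^sub>m Z"
    unfolding D Z_def using u B c
    by (simp add: square_mat_closed square_mat_algebra[where k=k]) (intro eq_matI; simp add: algebra_simps)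
  finally have expansion: "(D + ?d \<cdot>\<^sub>m (Bgh * Pgh - Bg * Pg * Ph - Pg * Bh * Ph)) * mat_adjoint Pgh
      = ?d \<cdot>\<^sub>m Z + D * (mat_adjoint Pgh - mat_adjoint Wgh) - ?d \<cdot>\<^sub>m (Bg * D * mat_adjoint Pgh)
        + ?d \<cdot>\<^sub>m (Wg * Bh * mat_adjoint Wg - Pg * Bh * mat_adjoint Pg)
        - ?d \<cdot>\<^sub>m (Pg * Bh * mat_adjoint Pg * D * mat_adjoint Pgh)" .
  have nD: "nrm D = d * nrm c" using d c by (simp add: D nrm_smult)
  have "nrm (D * (mat_adjoint Pgh - mat_adjoint Wgh)) \<le> d * nrm c * nrm (Wgh - Pgh)"
    using nrm_submult[OF Dc, of "mat_adjoint Pgh - mat_adjoint Wgh"] nrm_adjoint_diff[OF P(3) W(2)] u nD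
    by (simp add: square_mat_closed)
  moreover have "nrm (?d \<cdot>\<^sub>m (Bg * D * mat_adjoint Pgh)) \<le> d * (nrm Bg * (d * nrm c))"
    using nrm_unitary_right[of "Bg * D" k "mat_adjoint Pgh"] nrm_submult[OF B(1) Dc] d u B Dc nD
    by (simp add: nrm_smult[of _ k] square_mat_closed square_mat_algebra(7)[where k=k]
        unitary_mat_adjoint P mult_left_mono)
  moreover have "nrm (?d \<cdot>\<^sub>m (Wg * Bh * mat_adjoint Wg - Pg * Bh * mat_adjoint Pg))
      \<le> d * (2 * nrm Bh * nrm (Wg - Pg))"
    using nrm_conj_diff_le[OF P(1) W(1) B(2)] d u B
    by (simp add: nrm_smult[of _ k] square_mat_closed square_mat_algebra(7)[where k=k] mult_left_mono)
  moreover have "nrm (?d \<cdot>\<^sub>m (Pg * Bh * mat_adjoint Pg * D * mat_adjoint Pgh)) \<le> d * (nrm Bh * (d * nrm c))"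
  proof -
    have assoc: "Pg * Bh * mat_adjoint Pg * D * mat_adjoint Pgh
        = Pg * (Bh * (mat_adjoint Pg * D)) * mat_adjoint Pgh"
      using u B Dc by (simp add: square_mat_closed square_mat_algebra[where k=k])
    have "nrm (Pg * Bh * mat_adjoint Pg * D * mat_adjoint Pgh) = nrm (Bh * (mat_adjoint Pg * D))"
      unfolding assoc
      by (rule nrm_unitary_invariant) (use u B Dc P in \<open>auto simp: square_mat_closed intro: unitary_mat_adjoint\<close>)
    also have "\<dots> \<le> nrm Bh * (d * nrm c)"
      using nrm_submult[of Bh k "mat_adjoint Pg * D"] nrm_unitary_left[OF Dc unitary_mat_adjoint[OF P(1)]]
        B Dc u nD by (simp add: square_mat_closed)
    finally have bound: "nrm (Pg * Bh * mat_adjoint Pg * D * mat_adjoint Pgh) \<le> nrm Bh * (d * nrm c)" .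
    have "nrm (?d \<cdot>\<^sub>m (Pg * Bh * mat_adjoint Pg * D * mat_adjoint Pgh))
        = d * nrm (Pg * Bh * mat_adjoint Pg * D * mat_adjoint Pgh)"
      using d u B Dc by (intro trans[OF nrm_smult[where k=k]]) (simp_all add: square_mat_closed)
    then show ?thesis using mult_left_mono[OF bound d] by linarith
  qed
  moreover have "nrm (?d \<cdot>\<^sub>m Z) = d * nrm Z"
    using d u B c by (simp add: Z_def nrm_smult[of _ k] square_mat_closed)
  moreover have "nrm (D + ?d \<cdot>\<^sub>m (Bgh * Pgh - Bg * Pg * Ph - Pg * Bh * Ph))
      \<le> nrm (?d \<cdot>\<^sub>m Z) + nrm (D * (mat_adjoint Pgh - mat_adjoint Wgh))
        + nrm (?d \<cdot>\<^sub>m (Bg * D * mat_adjoint Pgh))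
        + nrm (?d \<cdot>\<^sub>m (Wg * Bh * mat_adjoint Wg - Pg * Bh * mat_adjoint Pg))
        + nrm (?d \<cdot>\<^sub>m (Pg * Bh * mat_adjoint Pg * D * mat_adjoint Pgh))"
  proof -
    have carriers: "?d \<cdot>\<^sub>m Z \<in> carrier_mat k k" "D * (mat_adjoint Pgh - mat_adjoint Wgh) \<in> carrier_mat k k"
      "?d \<cdot>\<^sub>m (Bg * D * mat_adjoint Pgh) \<in> carrier_mat k k"
      "?d \<cdot>\<^sub>m (Wg * Bh * mat_adjoint Wg - Pg * Bh * mat_adjoint Pg) \<in> carrier_mat k k"
      "?d \<cdot>\<^sub>m (Pg * Bh * mat_adjoint Pg * D * mat_adjoint Pgh) \<in> carrier_mat k k"
      using u B c Dc by (simp_all add: Z_def square_mat_closed)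
    have "nrm (D + ?d \<cdot>\<^sub>m (Bgh * Pgh - Bg * Pg * Ph - Pg * Bh * Ph))
        = nrm ((D + ?d \<cdot>\<^sub>m (Bgh * Pgh - Bg * Pg * Ph - Pg * Bh * Ph)) * mat_adjoint Pgh)"
      using nrm_unitary_right[OF _ unitary_mat_adjoint[OF P(3)]] u B Dc by (simp add: square_mat_closed)
    then show ?thesis
      unfolding expansion
      using carriers nrm_triangle[of _ k] nrm_diff_le[of _ k] square_mat_closed(1,2)[of _ k]
      by (smt (verit))
  qed
  ultimately show ?thesis unfolding D_def Z_def by (simp add: algebra_simps)
qed

lemma nrm_twisted_defect_le:
  fixes d :: real
  assumes P: "unitary_mat k Pg" "unitary_mat k Ph" "unitary_mat k Pgh"
    and W: "unitary_mat k Wg" "unitary_mat k Wgh"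
    and B: "Bg \<in> carrier_mat k k" "Bh \<in> carrier_mat k k" "Bgh \<in> carrier_mat k k"
    and c: "c \<in> carrier_mat k k" and d: "0 \<le> d"
    and defect: "Pg * Ph - Pgh = complex_of_real d \<cdot>\<^sub>m c"
    and small: "d * nrm Bg \<le> 1" "d * nrm Bh \<le> 1" "d * nrm Bgh \<le> 1"
  shows "nrm (mat_exp ((- complex_of_real d) \<cdot>\<^sub>m Bgh) * Pgh
      - mat_exp ((- complex_of_real d) \<cdot>\<^sub>m Bg) * Pg * (mat_exp ((- complex_of_real d) \<cdot>\<^sub>m Bh) * Ph))
    \<le> d * (nrm (c * mat_adjoint Wgh - (Wg * Bh * mat_adjoint Wg - Bgh + Bg))
           + nrm c * nrm (Wgh - Pgh) + 2 * nrm Bh * nrm (Wg - Pg)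
           + d * ((nrm Bg + nrm Bh) * nrm c + (nrm Bgh)\<^sup>2 + (nrm Bh)\<^sup>2 + (nrm Bg)\<^sup>2 + 4 * nrm Bg * nrm Bh))"
proof -
  let ?d = "complex_of_real d"
  define Eg Eh Egh where "Eg = mat_exp ((- ?d) \<cdot>\<^sub>m Bg)" and "Eh = mat_exp ((- ?d) \<cdot>\<^sub>m Bh)"
    and "Egh = mat_exp ((- ?d) \<cdot>\<^sub>m Bgh)"
  define Q where "Q = Pg * Ph - Pgh + ?d \<cdot>\<^sub>m (Bgh * Pgh - Bg * Pg * Ph - Pg * Bh * Ph)"
  note u = P[THEN unitary_mat_carrier] W[THEN unitary_mat_carrier]
  have E: "Eg \<in> carrier_mat k k" "Eh \<in> carrier_mat k k" "Egh \<in> carrier_mat k k"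
    unfolding Eg_def Eh_def Egh_def using B by simp_all
  have R: "nrm (Eg - 1\<^sub>m k + ?d \<cdot>\<^sub>m Bg) \<le> (d * nrm Bg)\<^sup>2" "nrm (Eh - 1\<^sub>m k + ?d \<cdot>\<^sub>m Bh) \<le> (d * nrm Bh)\<^sup>2"
    "nrm (Egh - 1\<^sub>m k + ?d \<cdot>\<^sub>m Bgh) \<le> (d * nrm Bgh)\<^sup>2"
    unfolding Eg_def Eh_def Egh_def using B d small by (simp_all add: nrm_exp_smult_remainder_le)
  have "nrm (Egh * Pgh - Eg * Pg * (Eh * Ph))
      \<le> nrm Q + nrm ((Egh - 1\<^sub>m k + ?d \<cdot>\<^sub>m Bgh) * Pgh) + nrm ((Eg - 1\<^sub>m k + ?d \<cdot>\<^sub>m Bg) * Pg * Ph)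
        + nrm (Pg * (Eh - 1\<^sub>m k + ?d \<cdot>\<^sub>m Bh) * Ph) + nrm ((Eg - 1\<^sub>m k) * Pg * ((Eh - 1\<^sub>m k) * Ph))"
  proof -
    have carriers: "Q \<in> carrier_mat k k" "(Egh - 1\<^sub>m k + ?d \<cdot>\<^sub>m Bgh) * Pgh \<in> carrier_mat k k"
      "(Eg - 1\<^sub>m k + ?d \<cdot>\<^sub>m Bg) * Pg * Ph \<in> carrier_mat k k"
      "Pg * (Eh - 1\<^sub>m k + ?d \<cdot>\<^sub>m Bh) * Ph \<in> carrier_mat k k"
      "(Eg - 1\<^sub>m k) * Pg * ((Eh - 1\<^sub>m k) * Ph) \<in> carrier_mat k k"
      unfolding Q_def using u B E by (simp_all add: square_mat_closed)
    show ?thesis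
      unfolding twisted_product_expansion[OF E(1,2,3) u(1,2,3) B, of ?d] Q_def[symmetric]
      using carriers nrm_triangle[of _ k] nrm_diff_le[of _ k] nrm_uminus[of Q k]
        square_mat_closed(1,2,4)[of _ k]
      by (smt (verit))
  qed
  also have "nrm Q \<le> d * (nrm (c * mat_adjoint Wgh - (Wg * Bh * mat_adjoint Wg - Bgh + Bg))
           + nrm c * nrm (Wgh - Pgh) + 2 * nrm Bh * nrm (Wg - Pg) + d * (nrm Bg + nrm Bh) * nrm c)"
    unfolding Q_def by (rule nrm_first_order_defect_le[OF P W B c d defect])
  also have "nrm ((Egh - 1\<^sub>m k + ?d \<cdot>\<^sub>m Bgh) * Pgh) \<le> (d * nrm Bgh)\<^sup>2"
    using nrm_unitary_right[OF _ P(3), of "Egh - 1\<^sub>m k + ?d \<cdot>\<^sub>m Bgh"] R(3) E B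
    by (simp add: square_mat_closed)
  also have "nrm ((Eg - 1\<^sub>m k + ?d \<cdot>\<^sub>m Bg) * Pg * Ph) \<le> (d * nrm Bg)\<^sup>2"
    using nrm_unitary_right[OF _ P(1), of "Eg - 1\<^sub>m k + ?d \<cdot>\<^sub>m Bg"]
      nrm_unitary_right[OF _ P(2), of "(Eg - 1\<^sub>m k + ?d \<cdot>\<^sub>m Bg) * Pg"] R(1) E B u
    by (simp add: square_mat_closed)
  also have "nrm (Pg * (Eh - 1\<^sub>m k + ?d \<cdot>\<^sub>m Bh) * Ph) \<le> (d * nrm Bh)\<^sup>2"
    using nrm_unitary_invariant[OF _ P(1) P(2), of "Eh - 1\<^sub>m k + ?d \<cdot>\<^sub>m Bh"] R(2) E B
    by (simp add: square_mat_closed)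
  also have "nrm ((Eg - 1\<^sub>m k) * Pg * ((Eh - 1\<^sub>m k) * Ph)) \<le> 2 * (d * nrm Bg) * (2 * (d * nrm Bh))"
  proof -
    have "nrm ((Eg - 1\<^sub>m k) * Pg * ((Eh - 1\<^sub>m k) * Ph)) \<le> nrm (Eg - 1\<^sub>m k) * nrm (Eh - 1\<^sub>m k)"
      using nrm_submult[of "(Eg - 1\<^sub>m k) * Pg" k "(Eh - 1\<^sub>m k) * Ph"]
        nrm_unitary_right[OF _ P(1), of "Eg - 1\<^sub>m k"] nrm_unitary_right[OF _ P(2), of "Eh - 1\<^sub>m k"] E u
      by (simp add: square_mat_closed)
    also have "\<dots> \<le> 2 * (d * nrm Bg) * (2 * (d * nrm Bh))"
      using nrm_exp_smult_diff_one_le[OF B(1) d small(1), folded Eg_def]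
        nrm_exp_smult_diff_one_le[OF B(2) d small(2), folded Eh_def] E B d
        nrm_nonneg[of "Eh - 1\<^sub>m k" k] nrm_nonneg[of Bg k]
      by (intro mult_mono) (simp_all add: square_mat_closed)
    finally show ?thesis .
  qed
  finally show ?thesis
    unfolding Eg_def Eh_def Egh_def by (simp add: algebra_simps power2_eq_square)
qed

lemma nrm_twisted_defect_le_uniform:
  fixes d K C :: real
  assumes P: "unitary_mat k Pg" "unitary_mat k Ph" "unitary_mat k Pgh"
    and W: "unitary_mat k Wg" "unitary_mat k Wgh"
    and B: "Bg \<in> carrier_mat k k" "Bh \<in> carrier_mat k k" "Bgh \<in> carrier_mat k k"
    and c: "c \<in> carrier_mat k k" and d: "0 \<le> d"
    and defect: "Pg * Ph - Pgh = complex_of_real d \<cdot>\<^sub>m c"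
    and K: "nrm Bg \<le> K" "nrm Bh \<le> K" "nrm Bgh \<le> K" and small: "d * K \<le> 1"
    and C: "nrm c \<le> C"
  shows "nrm (mat_exp ((- complex_of_real d) \<cdot>\<^sub>m Bgh) * Pgh
      - mat_exp ((- complex_of_real d) \<cdot>\<^sub>m Bg) * Pg * (mat_exp ((- complex_of_real d) \<cdot>\<^sub>m Bh) * Ph))
    \<le> d * (nrm (c * mat_adjoint Wgh - (Wg * Bh * mat_adjoint Wg - Bgh + Bg))
           + C * nrm (Wgh - Pgh) + 2 * K * nrm (Wg - Pg) + d * (2 * K * C + 7 * K\<^sup>2))"
proof -
  note u = P[THEN unitary_mat_carrier] W[THEN unitary_mat_carrier]
  have nonneg: "0 \<le> nrm Bg" "0 \<le> nrm Bh" "0 \<le> nrm Bgh" "0 \<le> nrm c"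
    "0 \<le> nrm (Wgh - Pgh)" "0 \<le> nrm (Wg - Pg)"
    using B c u by (auto intro!: nrm_nonneg[where k=k] square_mat_closed)
  have "d * nrm Bx \<le> 1" if "nrm Bx \<le> K" for Bx
    using mult_left_mono[OF that d] small by linarith
  then have "nrm (mat_exp ((- complex_of_real d) \<cdot>\<^sub>m Bgh) * Pgh
      - mat_exp ((- complex_of_real d) \<cdot>\<^sub>m Bg) * Pg * (mat_exp ((- complex_of_real d) \<cdot>\<^sub>m Bh) * Ph))
    \<le> d * (nrm (c * mat_adjoint Wgh - (Wg * Bh * mat_adjoint Wg - Bgh + Bg))
           + nrm c * nrm (Wgh - Pgh) + 2 * nrm Bh * nrm (Wg - Pg)
           + d * ((nrm Bg + nrm Bh) * nrm c + (nrm Bgh)\<^sup>2 + (nrm Bh)\<^sup>2 + (nrm Bg)\<^sup>2 + 4 * nrm Bg * nrm Bh))"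
    using K by (intro nrm_twisted_defect_le[OF P W B c d defect]) simp_all
  also have "\<dots> \<le> d * (nrm (c * mat_adjoint Wgh - (Wg * Bh * mat_adjoint Wg - Bgh + Bg))
           + C * nrm (Wgh - Pgh) + 2 * K * nrm (Wg - Pg) + d * (2 * K * C + 7 * K\<^sup>2))"
  proof -
    have "nrm c * nrm (Wgh - Pgh) \<le> C * nrm (Wgh - Pgh)" "nrm Bh * nrm (Wg - Pg) \<le> K * nrm (Wg - Pg)"
      "(nrm Bg + nrm Bh) * nrm c \<le> (2 * K) * C" "nrm Bg * nrm Bh \<le> K * K"
      "(nrm Bgh)\<^sup>2 \<le> K\<^sup>2" "(nrm Bh)\<^sup>2 \<le> K\<^sup>2" "(nrm Bg)\<^sup>2 \<le> K\<^sup>2"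
      using K C nonneg by (auto intro!: mult_mono mult_right_mono power_mono)
    then have "(nrm Bg + nrm Bh) * nrm c + (nrm Bgh)\<^sup>2 + (nrm Bh)\<^sup>2 + (nrm Bg)\<^sup>2 + 4 * nrm Bg * nrm Bh
        \<le> 2 * K * C + 7 * K\<^sup>2"
      by (simp add: power2_eq_square)
    then have "d * ((nrm Bg + nrm Bh) * nrm c + (nrm Bgh)\<^sup>2 + (nrm Bh)\<^sup>2 + (nrm Bg)\<^sup>2
        + 4 * nrm Bg * nrm Bh) \<le> d * (2 * K * C + 7 * K\<^sup>2)"
      by (rule mult_left_mono[OF _ d])
    then show ?thesis
      using \<open>nrm c * nrm (Wgh - Pgh) \<le> C * nrm (Wgh - Pgh)\<close>
        \<open>nrm Bh * nrm (Wg - Pg) \<le> K * nrm (Wg - Pg)\<close>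
      by (intro mult_left_mono[OF _ d]) linarith
  qed
  finally show ?thesis .
qed

lemma twisted_defect_small_o:
  fixes U :: "nat filter" and k :: "nat \<Rightarrow> nat" and d :: "nat \<Rightarrow> real"
    and Pg Ph Pgh Wg Wh Wgh Bg Bh Bgh :: "nat \<Rightarrow> complex mat"
  assumes P: "\<And>n. unitary_mat (k n) (Pg n)" "\<And>n. unitary_mat (k n) (Ph n)" "\<And>n. unitary_mat (k n) (Pgh n)"
    and W: "\<And>n. unitary_mat (k n) (Wg n)" "\<And>n. unitary_mat (k n) (Wh n)" "\<And>n. unitary_mat (k n) (Wgh n)"
    and B: "\<And>n. Bg n \<in> carrier_mat (k n) (k n)" "\<And>n. Bh n \<in> carrier_mat (k n) (k n)"
      "\<And>n. Bgh n \<in> carrier_mat (k n) (k n)"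
    and B_bounded: "\<exists>K. \<forall>n. nrm (Bg n) \<le> K" "\<exists>K. \<forall>n. nrm (Bh n) \<le> K" "\<exists>K. \<forall>n. nrm (Bgh n) \<le> K"
    and d: "\<And>n. 0 \<le> d n" "(d \<longlongrightarrow> 0) U"
    and close: "\<exists>C. eventually (\<lambda>n. nrm (Wg n - Pg n) \<le> C * d n) U"
      "\<exists>C. eventually (\<lambda>n. nrm (Wh n - Ph n) \<le> C * d n) U"
      "\<exists>C. eventually (\<lambda>n. nrm (Wgh n - Pgh n) \<le> C * d n) U"
    and relator: "\<exists>C. eventually (\<lambda>n. nrm (Wg n * Wh n - Wgh n) \<le> C * d n) U"
    and cocycle: "((\<lambda>n. nrm ((if d n > 0 then (1 / complex_of_real (d n)) \<cdot>\<^sub>m (Pg n * Ph n - Pgh n)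
        else 0\<^sub>m (k n) (k n)) * mat_adjoint (Wgh n) - (Wg n * Bh n * mat_adjoint (Wg n) - Bgh n + Bg n)))
        \<longlongrightarrow> 0) U"
  shows "small_o_U U (\<lambda>n. nrm (mat_exp ((- complex_of_real (d n)) \<cdot>\<^sub>m Bgh n) * Pgh n
      - mat_exp ((- complex_of_real (d n)) \<cdot>\<^sub>m Bg n) * Pg n * (mat_exp ((- complex_of_real (d n)) \<cdot>\<^sub>m Bh n) * Ph n)))
    d"
proof -
  define c where "c n = (if d n > 0 then (1 / complex_of_real (d n)) \<cdot>\<^sub>m (Pg n * Ph n - Pgh n)
      else 0\<^sub>m (k n) (k n))" for n
  define Z where "Z n = c n * mat_adjoint (Wgh n) - (Wg n * Bh n * mat_adjoint (Wg n) - Bgh n + Bg n)" for n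
  note u = P[THEN unitary_mat_carrier] W[THEN unitary_mat_carrier]
  obtain Kg Kh Kgh where Ks: "\<forall>n. nrm (Bg n) \<le> Kg" "\<forall>n. nrm (Bh n) \<le> Kh" "\<forall>n. nrm (Bgh n) \<le> Kgh"
    using B_bounded by blast
  define K where "K = max Kg (max Kh Kgh)"
  have K: "\<And>n. nrm (Bg n) \<le> K" "\<And>n. nrm (Bh n) \<le> K" "\<And>n. nrm (Bgh n) \<le> K"
    using Ks unfolding K_def by (simp_all add: le_max_iff_disj)
  have "0 \<le> K" using K(1)[of 0] nrm_nonneg[OF B(1)[of 0]] by linarith
  obtain Cg where Cg: "0 \<le> Cg" "eventually (\<lambda>n. nrm (Wg n - Pg n) \<le> Cg * d n) U"
    using eventually_le_mult_nonneg_const[OF close(1) d(1)] .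
  obtain Ch where Ch: "0 \<le> Ch" "eventually (\<lambda>n. nrm (Wh n - Ph n) \<le> Ch * d n) U"
    using eventually_le_mult_nonneg_const[OF close(2) d(1)] .
  obtain Cgh where Cgh: "0 \<le> Cgh" "eventually (\<lambda>n. nrm (Wgh n - Pgh n) \<le> Cgh * d n) U"
    using eventually_le_mult_nonneg_const[OF close(3) d(1)] .
  obtain Cr where Cr: "0 \<le> Cr" "eventually (\<lambda>n. nrm (Wg n * Wh n - Wgh n) \<le> Cr * d n) U"
    using eventually_le_mult_nonneg_const[OF relator d(1)] .
  define Cc where "Cc = Cg + Ch + Cr + Cgh"
  define \<epsilon> where "\<epsilon> n = nrm (Z n) + Cc * nrm (Wgh n - Pgh n) + 2 * K * nrm (Wg n - Pg n)
      + d n * (2 * K * Cc + 7 * K\<^sup>2)" for n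
  have small: "eventually (\<lambda>n. d n * K \<le> 1) U"
    by (rule eventually_mult_le_one[OF d(2) d(1) \<open>0 \<le> K\<close>])
  have "eventually (\<lambda>n. nrm (mat_exp ((- complex_of_real (d n)) \<cdot>\<^sub>m Bgh n) * Pgh n
      - mat_exp ((- complex_of_real (d n)) \<cdot>\<^sub>m Bg n) * Pg n * (mat_exp ((- complex_of_real (d n)) \<cdot>\<^sub>m Bh n) * Ph n))
      \<le> d n * \<epsilon> n) U"
    using Cg(2) Ch(2) Cgh(2) Cr(2) small
  proof eventually_elim
    case (elim n)
    have "nrm (Pg n * Ph n - Pgh n) \<le> Cc * d n"
      using lift_defect_le[OF P W, of n] elim unfolding Cc_def by (simp add: algebra_simps)
    then have "Pg n * Ph n - Pgh n = complex_of_real (d n) \<cdot>\<^sub>m c n" "nrm (c n) \<le> Cc"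
      using normalized_defect[of "d n" "Pg n * Ph n - Pgh n" "k n" Cc] u d(1) Cg Ch Cgh Cr
      unfolding c_def Cc_def by (simp_all add: square_mat_closed)
    moreover have "c n \<in> carrier_mat (k n) (k n)" using u by (simp add: c_def square_mat_closed)
    ultimately show ?case
      unfolding \<epsilon>_def Z_def
      by (intro nrm_twisted_defect_le_uniform[OF P W(1,3) B _ d(1) _ K elim(5)]) (simp_all add: mult.commute)
  qed
  moreover have "(\<epsilon> \<longlongrightarrow> 0) U"
  proof -
    have "((\<lambda>n. nrm (Z n)) \<longlongrightarrow> 0) U" using cocycle unfolding Z_def c_def .
    moreover have "((\<lambda>n. nrm (Wg n - Pg n)) \<longlongrightarrow> 0) U" "((\<lambda>n. nrm (Wgh n - Pgh n)) \<longlongrightarrow> 0) U"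
      using u by (auto intro!: tendsto_zero_if_eventually_le_mult[OF d(2) _ Cg(2)]
          tendsto_zero_if_eventually_le_mult[OF d(2) _ Cgh(2)] nrm_nonneg[where k="k _"] square_mat_closed)
    ultimately have "(\<epsilon> \<longlongrightarrow> 0 + Cc * 0 + 2 * K * 0 + 0 * (2 * K * Cc + 7 * K\<^sup>2)) U"
      unfolding \<epsilon>_def[abs_def] by (intro tendsto_intros d(2))
    then show ?thesis by simp
  qed
  moreover have "0 \<le> nrm (mat_exp ((- complex_of_real (d n)) \<cdot>\<^sub>m Bgh n) * Pgh n
      - mat_exp ((- complex_of_real (d n)) \<cdot>\<^sub>m Bg n) * Pg n * (mat_exp ((- complex_of_real (d n)) \<cdot>\<^sub>m Bh n) * Ph n))"
    for n using u B by (intro nrm_nonneg[where k="k n"]) (simp add: square_mat_closed)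
  ultimately show ?thesis using d(1) by (intro small_o_UI[where \<epsilon>=\<epsilon>])
qed

end

theorem lemma3p5:
  fixes U :: "nat filter" and G :: "('g, 'm) monoid_scheme" and S :: "'s set"
    and R :: "'s word set" and \<pi> :: "'s word \<Rightarrow> 'g"
    and nrm :: "complex mat \<Rightarrow> real" and k :: "nat \<Rightarrow> nat"
    and \<phi> :: "nat \<Rightarrow> 's \<Rightarrow> complex mat" and \<sigma> :: "'g \<Rightarrow> 's word"
    and pt :: "nat \<Rightarrow> 'g \<Rightarrow> complex mat" and \<beta> :: "nat \<Rightarrow> 'g \<Rightarrow> complex mat"
  assumes ultra: "nonprincipal_ultrafilter U"
    and pres: "is_presentation G S R \<pi>"
    and norms: "unitarily_invariant_submult_norms nrm"
    and phi_unitary: "\<forall>n. \<forall>s \<in> S. unitary_mat (k n) (\<phi> n s)"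
    and def_lim: "((\<lambda>n. deficiency nrm (k n) R (\<phi> n)) \<longlongrightarrow> 0) U"
    and sec: "\<forall>g \<in> carrier G. \<sigma> g \<in> words S \<and> \<pi> (\<sigma> g) = g"
    and pt_unitary: "\<forall>n. \<forall>g \<in> carrier G. unitary_mat (k n) (pt n g)"
    and pt_one: "\<forall>n. pt n \<one>\<^bsub>G\<^esub> = 1\<^sub>m (k n)"
    and pt_inv: "\<forall>n. \<forall>g \<in> carrier G. pt n (inv\<^bsub>G\<^esub> g) = mat_adjoint (pt n g)"
    and pt_close: "\<forall>g \<in> carrier G. \<exists>C. eventually (\<lambda>n.
        nrm (word_eval (k n) (\<phi> n) (\<sigma> g) - pt n g) \<le> C * deficiency nrm (k n) R (\<phi> n)) U"
    and beta_mat: "\<forall>n. \<forall>g \<in> carrier G. \<beta> n g \<in> carrier_mat (k n) (k n)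
                       \<and> mat_adjoint (\<beta> n g) = - \<beta> n g"
    and beta_bdd: "\<forall>g \<in> carrier G. \<exists>C. \<forall>n. nrm (\<beta> n g) \<le> C"
    and beta_eq: "\<forall>g \<in> carrier G. \<forall>h \<in> carrier G. ueq U nrm
        (\<lambda>n. coc nrm k R \<phi> G pt n g h * mat_adjoint (word_eval (k n) (\<phi> n) (\<sigma> (g \<otimes>\<^bsub>G\<^esub> h))))
        (\<lambda>n. word_eval (k n) (\<phi> n) (\<sigma> g) * \<beta> n h * mat_adjoint (word_eval (k n) (\<phi> n) (\<sigma> g))
             - \<beta> n (g \<otimes>\<^bsub>G\<^esub> h) + \<beta> n g)"
  shows "\<forall>g \<in> carrier G. \<forall>h \<in> carrier G. small_o_U U
           (\<lambda>n. nrm (psi nrm k R \<phi> \<beta> pt n (g \<otimes>\<^bsub>G\<^esub> h)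
                     - psi nrm k R \<phi> \<beta> pt n g * psi nrm k R \<phi> \<beta> pt n h))
           (\<lambda>n. deficiency nrm (k n) R (\<phi> n))"
proof (intro ballI)
  fix g h assume g: "g \<in> carrier G" and h: "h \<in> carrier G"
  interpret unitarily_invariant_norm nrm by (rule unitarily_invariant_norm.intro[OF norms])
  have "group G" "finite R" using pres unfolding is_presentation_def by blast+
  then have gh: "g \<otimes>\<^bsub>G\<^esub> h \<in> carrier G" using g h by (simp add: group.is_monoid monoid.m_closed)
  have W: "unitary_mat (k n) (word_eval (k n) (\<phi> n) (\<sigma> x))" if "x \<in> carrier G" for n x
    using phi_unitary sec that by (simp add: word_eval_unitary[of S])
  obtain C where C: "\<forall>k f. (\<forall>s\<in>S. unitary_mat k (f s)) \<longrightarrow>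
      nrm (word_eval k f (\<sigma> g) * word_eval k f (\<sigma> h) - word_eval k f (\<sigma> (g \<otimes>\<^bsub>G\<^esub> h)))
        \<le> C * deficiency nrm k R f"
    using section_word_eval_defect[OF pres sec g h] by blast
  show "small_o_U U (\<lambda>n. nrm (psi nrm k R \<phi> \<beta> pt n (g \<otimes>\<^bsub>G\<^esub> h)
      - psi nrm k R \<phi> \<beta> pt n g * psi nrm k R \<phi> \<beta> pt n h)) (\<lambda>n. deficiency nrm (k n) R (\<phi> n))"
    unfolding psi_def
  proof (rule twisted_defect_small_o)
    show "\<exists>C. eventually (\<lambda>n. nrm (word_eval (k n) (\<phi> n) (\<sigma> g) * word_eval (k n) (\<phi> n) (\<sigma> h)
        - word_eval (k n) (\<phi> n) (\<sigma> (g \<otimes>\<^bsub>G\<^esub> h))) \<le> C * deficiency nrm (k n) R (\<phi> n)) U"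
      using C phi_unitary by (intro exI[of _ C] always_eventually) blast
    show "((\<lambda>n. nrm ((if deficiency nrm (k n) R (\<phi> n) > 0
        then (1 / complex_of_real (deficiency nrm (k n) R (\<phi> n))) \<cdot>\<^sub>m (pt n g * pt n h - pt n (g \<otimes>\<^bsub>G\<^esub> h))
        else 0\<^sub>m (k n) (k n)) * mat_adjoint (word_eval (k n) (\<phi> n) (\<sigma> (g \<otimes>\<^bsub>G\<^esub> h)))
        - (word_eval (k n) (\<phi> n) (\<sigma> g) * \<beta> n h * mat_adjoint (word_eval (k n) (\<phi> n) (\<sigma> g))
           - \<beta> n (g \<otimes>\<^bsub>G\<^esub> h) + \<beta> n g))) \<longlongrightarrow> 0) U"
      using beta_eq g h unfolding ueq_def coc_def Let_def by simp
  qed (use g h gh pt_unitary W beta_mat beta_bdd pt_close def_lim \<open>finite R\<close> in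
      \<open>simp_all add: deficiency_nonneg\<close>)
qed

end
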